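(* Let $\Delta \subset \mathbb{S}^2$ be an oriented closed disk and let $L_0, L_1 \subset \Delta$ be two non-crossing loops. Let $k \in \{2,3\}$ and let $n_1, \dots, n_k \in L_0$ be distinct points listed in the clockwise order of $L_0$. Let $X$ be a union of some of the open segments $L_0(n_1,n_2), \dots, L_0(n_{k-1},n_k), L_0(n_k,n_1)$. Assume that $\Delta^{\mathrm{in}}_{L_0} \cap \Delta^{\mathrm{in}}_{L_1} = \{n_1,\dots,n_k\} \cup X$. For each $1 \le m \le k$ with $p = 1 + (m \bmod k)$ such that $L_0(n_m,n_p) \not\subseteq X$, define $$Z_m = L_0[n_m,n_p] \cup L_1[n_p,n_m].$$ Then each such $Z_m$ is a (simple) loop that is non-crossing relative to $L_0$ and relative to $L_1$, and for some such $m$ the disk $\Delta^{\mathrm{in}}_{Z_m}$ contains both $\Delta^{\mathrm{in}}_{L_0}$ and $\Delta^{\mathrm{in}}_{L_1}$.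
   Context: $\mathbb{S}^2$ is the unit $2$-sphere; a loop is a subset homeomorphic to $\mathbb{S}^1$. A loop $L$ divides $\mathbb{S}^2$ into two closed regions $\Delta_L^0,\Delta_L^1$, each homeomorphic to a closed disk, meeting in $L$; two loops $L,L'$ are non-crossing if $L\subseteq\Delta^0_{L'}$ or $L\subseteq\Delta^1_{L'}$. For a loop $L$ contained in the closed disk $\Delta$, exactly one of its two regions is contained in $\Delta$; it is denoted $\Delta^{\mathrm{in}}_L$, and the other is $\Delta^{\mathrm{out}}_L$. The orientation of $\Delta$ determines right and left; the clockwise orientation of a loop $L\subset\Delta$ is the direction of travel keeping the interior of $\Delta^{\mathrm{in}}_L$ on the right. For distinct $x,y \in L$, $L[x,y]$ denotes the closed segment of $L$ traversed when travelling along $L$ from $x$ to $y$ in the clockwise orientation of $L$, and $L(x,y)$ denotes its interior (open segment). *)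

theory Defs
  imports "HOL-Complex_Analysis.Winding_Numbers"
begin

definition S2 :: "(real^3) set" where
  "S2 = sphere 0 1"

definition is_loop :: "(real^3) set \<Rightarrow> bool" where
  "is_loop L \<longleftrightarrow> L \<subseteq> S2 \<and> L homeomorphic (sphere (0::complex) 1)"

definition loop_regions :: "(real^3) set \<Rightarrow> (real^3) set set" where
  "loop_regions L = {closure C | C. C \<in> components (S2 - L)}"

definition non_crossing :: "(real^3) set \<Rightarrow> (real^3) set \<Rightarrow> bool" where
  "non_crossing L L' \<longleftrightarrow> (\<exists>D \<in> loop_regions L'. L \<subseteq> D)"

text \<open>An oriented closed disk in the sphere is given by an (orientation-carrying) embedding
  h of the closed unit disk of the complex plane; the disk is h ` cball 0 1, and its
  orientation is the one transported from the standard orientation of the plane.\<close>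
definition oriented_disk :: "(complex \<Rightarrow> real^3) \<Rightarrow> bool" where
  "oriented_disk h \<longleftrightarrow> continuous_on (cball 0 1) h \<and> inj_on h (cball 0 1) \<and> h ` cball 0 1 \<subseteq> S2"

definition disk_in :: "(real^3) set \<Rightarrow> (real^3) set \<Rightarrow> (real^3) set" where
  "disk_in \<Delta> L = (THE D. D \<in> loop_regions L \<and> D \<subseteq> \<Delta>)"

text \<open>Clockwise parametrisations (in the chart h) of a loop L in the oriented disk:
  simple closed curves with image L whose winding number around every point of the
  interior of the inner region is -1, i.e. the interior stays on the right.\<close>
definition cw_param :: "(complex \<Rightarrow> real^3) \<Rightarrow> (real^3) set \<Rightarrow> (real \<Rightarrow> complex) \<Rightarrow> bool" where
  "cw_param h L g \<longleftrightarrow> simple_path g \<and> pathfinish g = pathstart g \<and>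
     path_image g \<subseteq> cball 0 1 \<and> h ` path_image g = L \<and>
     (\<forall>w \<in> cball 0 1. h w \<in> disk_in (h ` cball 0 1) L - L \<longrightarrow> winding_number g w = -1)"

definition cw_closed_seg :: "(complex \<Rightarrow> real^3) \<Rightarrow> (real^3) set \<Rightarrow> real^3 \<Rightarrow> real^3 \<Rightarrow> (real^3) set" where
  "cw_closed_seg h L x y = {p. \<exists>g t s. cw_param h L g \<and> h (pathstart g) = x \<and>
      0 < t \<and> t < 1 \<and> h (g t) = y \<and> 0 \<le> s \<and> s \<le> t \<and> p = h (g s)}"

definition cw_open_seg :: "(complex \<Rightarrow> real^3) \<Rightarrow> (real^3) set \<Rightarrow> real^3 \<Rightarrow> real^3 \<Rightarrow> (real^3) set" where
  "cw_open_seg h L x y = {p. \<exists>g t s. cw_param h L g \<and> h (pathstart g) = x \<and>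
      0 < t \<and> t < 1 \<and> h (g t) = y \<and> 0 < s \<and> s < t \<and> p = h (g s)}"

end

theory Submission
  imports Defs "HOL-Homology.Invariance_of_Domain"
begin

(* Read everything in the chart h of the disk. There the loops are Jordan curves g0, g1, oriented
   clockwise, and the hypothesis on the intersection of their inner regions forces the two insides
   to be disjoint. Z_m becomes the closed path running along g0 from n_m to n_(m+1) and back along
   g1; it is a simple loop as soon as that open arc of g0 avoids g1. For a point w inside g0 the
   winding numbers of these paths around w add up to that of g0, namely -1, because the arcs of g1
   cancel. Each of them is -1, 0 or 1, so one path winds -1 around w: it is a clockwise simple loop
   enclosing the inside of g0, and also that of g1, since it closes an arc of g1 from outside.
   On the sphere the two regions of a loop in the disk are the image of its closed planar inside
   and the complement of the image of its inside, which turns these facts into the theorem. *)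

section \<open>Clockwise parametrisations of Jordan curves\<close>

definition clockwise_param :: "complex set \<Rightarrow> (real \<Rightarrow> complex) \<Rightarrow> bool" where
  "clockwise_param \<gamma> g \<longleftrightarrow> simple_path g \<and> pathfinish g = pathstart g \<and> path_image g = \<gamma> \<and>
     (\<forall>w\<in>inside \<gamma>. winding_number g w = -1)"

lemma simple_path_inj_on_atLeastLessThan:
  assumes "simple_path g"
  shows "inj_on g {0..<1}"
  using assms unfolding simple_path_def loop_free_def inj_on_def by force

lemma simple_path_eq_interior_param:
  assumes "simple_path g" "x \<in> {0<..<1}" "y \<in> {0..1}" "g x = g y"
  shows "x = y"
  using assms unfolding simple_path_def loop_free_def by force

lemma simple_path_open_arc:
  assumes "simple_path g" "0 \<le> a" "a < b" "b \<le> 1"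
  shows "g ` {a<..<b} = g ` {a..b} - {g a, g b}"
proof -
  have "g x \<noteq> g a" "g x \<noteq> g b" if "x \<in> {a<..<b}" for x
    using simple_path_eq_interior_param[OF assms(1), of x a] simple_path_eq_interior_param[OF assms(1), of x b]
      that assms(2-4) by auto
  moreover have "{a..b} = {a<..<b} \<union> {a, b}" using assms(3) by auto
  ultimately show ?thesis by auto
qed

lemma clockwise_param_shiftpath:
  assumes g: "clockwise_param \<gamma> g" and a: "a \<in> {0..1}"
  shows "clockwise_param \<gamma> (shiftpath a g)"
proof -
  have sg: "simple_path g" and cg: "pathfinish g = pathstart g" and ig: "path_image g = \<gamma>"
    and wg: "\<forall>w\<in>inside \<gamma>. winding_number g w = -1"
    using g by (auto simp: clockwise_param_def)
  have "winding_number (shiftpath a g) w = -1" if w: "w \<in> inside \<gamma>" for w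
  proof -
    have "w \<notin> path_image g" using w ig inside_no_overlap by blast
    then show ?thesis
      using winding_number_shiftpath[OF simple_path_imp_path[OF sg] _ cg a] wg w by simp
  qed
  then show ?thesis
    using simple_path_shiftpath[OF sg cg] closed_shiftpath[OF cg] path_image_shiftpath[OF _ cg] ig a
    unfolding clockwise_param_def by auto
qed

lemma clockwise_param_exists:
  assumes sc: "simple_path c" and cc: "pathfinish c = pathstart c"
  obtains g where "clockwise_param (path_image c) g"
proof (cases rule: simple_closed_path_winding_number_inside[OF sc])
  case 1
  have "winding_number (reversepath c) w = -1" if w: "w \<in> inside (path_image c)" for w
  proof -
    have "w \<notin> path_image c" using w inside_no_overlap by blast
    then show ?thesis using winding_number_reversepath[OF simple_path_imp_path[OF sc]] 1 w by simp
  qed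
  then have "clockwise_param (path_image c) (reversepath c)"
    using sc cc simple_path_reversepath unfolding clockwise_param_def by auto
  then show ?thesis by (rule that)
next
  case 2
  then show ?thesis using sc cc that unfolding clockwise_param_def by blast
qed

lemma clockwise_param_surj:
  assumes g: "clockwise_param \<gamma> g" and z: "z \<in> \<gamma>"
  obtains u where "u \<in> {0..<1}" "g u = z"
proof -
  have cg: "g 1 = g 0" using g by (simp add: clockwise_param_def pathfinish_def pathstart_def)
  obtain u where u: "u \<in> {0..1}" "g u = z" using g z by (auto simp: clockwise_param_def path_image_def)
  show ?thesis
    using that[of u] that[of 0] u cg by (cases "u = 1") auto
qed

lemma clockwise_param_from:
  assumes g: "clockwise_param \<gamma> g" and z: "z \<in> \<gamma>"
  obtains g' where "clockwise_param \<gamma> g'" "g' 0 = z"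
proof -
  obtain u where u: "u \<in> {0..<1}" "g u = z" using clockwise_param_surj[OF g z] .
  have "clockwise_param \<gamma> (shiftpath u g)" using clockwise_param_shiftpath[OF g] u by simp
  then show ?thesis using that u by (simp add: shiftpath_def)
qed

lemma homotopic_paths_in_arc_image:
  fixes c :: "real \<Rightarrow> 'a::real_normed_vector"
  assumes "arc c" "path p" "path q" "path_image p \<subseteq> path_image c" "path_image q \<subseteq> path_image c"
    "pathstart p = pathstart q" "pathfinish p = pathfinish q"
  shows "homotopic_paths (path_image c) p q"
proof -
  have "{0..1::real} homeomorphic path_image c"
    using homeomorphic_arc_image_interval[of c 0 1] assms(1) homeomorphic_sym by auto
  then have "simply_connected (path_image c)"
    using homeomorphic_simply_connected convex_imp_simply_connected[of "{0..1::real}"] by auto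
  then show ?thesis
    using assms(2-) unfolding simply_connected_eq_homotopic_paths by metis
qed

lemma simple_loop_arcs:
  assumes sg: "simple_path g" and cg: "pathfinish g = pathstart g" and t: "0 < t" "t < 1"
  shows "g ` {0..t} \<union> g ` {t..1} = path_image g"
    and "g ` {0..t} \<inter> g ` {t..1} = {g 0, g t}"
    and "g (t/2) \<in> g ` {0..t} - g ` {t..1}"
    and "g ((t+1)/2) \<in> g ` {t..1} - g ` {0..t}"
proof -
  have g1: "g 1 = g 0" using cg by (simp add: pathfinish_def pathstart_def)
  have "{0..t} \<union> {t..1} = {0..1::real}" using t by auto
  then show "g ` {0..t} \<union> g ` {t..1} = path_image g" unfolding path_image_def image_Un[symmetric] by simp
  have eq: "a = b \<or> a = 0 \<and> b = 1 \<or> a = 1 \<and> b = 0" if "g a = g b" "a \<in> {0..1}" "b \<in> {0..1}" for a b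
    using sg that unfolding simple_path_def loop_free_def by blast
  show "g ` {0..t} \<inter> g ` {t..1} = {g 0, g t}"
  proof
    show "g ` {0..t} \<inter> g ` {t..1} \<subseteq> {g 0, g t}"
    proof
      fix z assume "z \<in> g ` {0..t} \<inter> g ` {t..1}"
      then obtain a b where a: "a \<in> {0..t}" "z = g a" and b: "b \<in> {t..1}" "z = g b" by auto
      then have "a = b \<or> a = 0 \<and> b = 1 \<or> a = 1 \<and> b = 0" using eq[of a b] t by auto
      then show "z \<in> {g 0, g t}" using a b t by auto
    qed
    show "{g 0, g t} \<subseteq> g ` {0..t} \<inter> g ` {t..1}"
      using t g1 by (auto intro!: image_eqI[of "g 0" g 1])
  qed
  have "g (t/2) \<notin> g ` {t..1}"
  proof
    assume "g (t/2) \<in> g ` {t..1}"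
    then obtain b where "b \<in> {t..1}" "g (t/2) = g b" by auto
    then show False using eq[of "t/2" b] t by auto
  qed
  then show "g (t/2) \<in> g ` {0..t} - g ` {t..1}" using t by auto
  have "g ((t+1)/2) \<notin> g ` {0..t}"
  proof
    assume "g ((t+1)/2) \<in> g ` {0..t}"
    then obtain a where "a \<in> {0..t}" "g ((t+1)/2) = g a" by auto
    then show False using eq[of "(t+1)/2" a] t by auto
  qed
  then show "g ((t+1)/2) \<in> g ` {t..1} - g ` {0..t}" using t by auto
qed

lemma connected_subset_loop_arc:
  fixes g :: "real \<Rightarrow> 'a::t2_space"
  assumes sg: "simple_path g" and cg: "pathfinish g = pathstart g" and t: "0 < t" "t < 1"
    and S: "connected S" "S \<subseteq> path_image g" "g 0 \<notin> S" "g t \<notin> S"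
  shows "S \<subseteq> g ` {0..t} \<or> S \<subseteq> g ` {t..1}"
proof -
  define A where "A = g ` {0..t}"
  define B where "B = g ` {t..1}"
  note arcs = simple_loop_arcs(1,2)[OF sg cg t, folded A_def B_def]
  have "continuous_on {0..1} g" using simple_path_imp_path[OF sg] by (simp add: path_def)
  then have "compact A" "compact B"
    unfolding A_def B_def using t by (auto intro!: compact_continuous_image elim!: continuous_on_subset)
  then have "open (- B)" "open (- A)" by (auto intro: compact_imp_closed)
  moreover have "- B \<inter> - A \<inter> S = {}" using arcs(1) S(2) by blast
  moreover have "S \<subseteq> - B \<union> - A" using equalityD1[OF arcs(2)] S(3,4) by blast
  ultimately have "- B \<inter> S = {} \<or> - A \<inter> S = {}" by (rule connectedD[OF S(1)])
  then show ?thesis unfolding A_def B_def by blast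
qed

lemma simple_loop_initial_arc_cases:
  fixes g g' :: "real \<Rightarrow> 'a::t2_space"
  assumes sg: "simple_path g" "pathfinish g = pathstart g"
    and sg': "simple_path g'" "pathfinish g' = pathstart g'"
    and same: "path_image g' = path_image g" "g' 0 = g 0" "g' t' = g t"
    and t: "0 < t" "t < 1" and t': "0 < t'" "t' < 1"
  shows "g' ` {0..t'} = g ` {0..t} \<or> g' ` {0..t'} = g ` {t..1} \<and> g' ` {t'..1} = g ` {0..t}"
proof -
  define A where "A = g ` {0..t}"
  define B where "B = g ` {t..1}"
  define A' where "A' = g' ` {0..t'} - {g 0, g t}"
  define B' where "B' = g' ` {t'..1} - {g 0, g t}"
  note arcs = simple_loop_arcs[OF sg t, folded A_def B_def]
  note arcs' = simple_loop_arcs(1,2)[OF sg' t', unfolded same]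
  have AB': "g' ` {0..t'} = A' \<union> {g 0, g t}" "g' ` {t'..1} = B' \<union> {g 0, g t}"
    using arcs'(2) unfolding A'_def B'_def by auto
  have gamma: "path_image g = A' \<union> B' \<union> {g 0, g t}" using arcs'(1) AB' by auto
  have "g' 1 = g 0" using sg'(2) same(2) by (simp add: pathfinish_def pathstart_def)
  then have int: "A' = g' ` {0<..<t'}" "B' = g' ` {t'<..<1}"
    unfolding A'_def B'_def using simple_path_open_arc[OF sg'(1)] t' same(2,3) by auto
  have "continuous_on {0..1} g'" using simple_path_imp_path[OF sg'(1)] by (simp add: path_def)
  then have "connected A'" "connected B'"
    unfolding int using t' by (auto intro!: connected_continuous_image elim!: continuous_on_subset)
  moreover have "A' \<subseteq> path_image g" "B' \<subseteq> path_image g" "g 0 \<notin> A'" "g t \<notin> A'" "g 0 \<notin> B'" "g t \<notin> B'"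
    using arcs'(1) unfolding A'_def B'_def by auto
  ultimately have "A' \<subseteq> A \<or> A' \<subseteq> B" "B' \<subseteq> A \<or> B' \<subseteq> B"
    using connected_subset_loop_arc[OF sg t, folded A_def B_def] by blast+
  moreover have "\<not> (A' \<subseteq> A \<and> B' \<subseteq> A)"
  proof
    assume "A' \<subseteq> A \<and> B' \<subseteq> A"
    then have "path_image g \<subseteq> A" using arcs(2) gamma by blast
    then show False using arcs(1,4) by auto
  qed
  moreover have "\<not> (A' \<subseteq> B \<and> B' \<subseteq> B)"
  proof
    assume "A' \<subseteq> B \<and> B' \<subseteq> B"
    then have "path_image g \<subseteq> B" using arcs(2) gamma by blast
    then show False using arcs(1,3) by auto
  qed
  ultimately consider "A' \<subseteq> A" "B' \<subseteq> B" | "A' \<subseteq> B" "B' \<subseteq> A"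
    by blast
  then show ?thesis
  proof cases
    case 1
    have "A \<subseteq> g' ` {0..t'}"
    proof
      fix z assume z: "z \<in> A"
      then have "z \<in> A' \<union> B' \<union> {g 0, g t}" using arcs(1) gamma by auto
      moreover have "z \<notin> B' \<or> z \<in> {g 0, g t}" using z 1 arcs(2) by auto
      ultimately show "z \<in> g' ` {0..t'}" unfolding AB' by auto
    qed
    moreover have "g' ` {0..t'} \<subseteq> A" unfolding AB' using 1 arcs(2) by auto
    ultimately show ?thesis unfolding A_def by auto
  next
    case 2
    have "B \<subseteq> g' ` {0..t'}"
    proof
      fix z assume z: "z \<in> B"
      then have "z \<in> A' \<union> B' \<union> {g 0, g t}" using arcs(1) gamma by auto
      moreover have "z \<notin> B' \<or> z \<in> {g 0, g t}" using z 2 arcs(2) by auto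
      ultimately show "z \<in> g' ` {0..t'}" unfolding AB' by auto
    qed
    moreover have "A \<subseteq> g' ` {t'..1}"
    proof
      fix z assume z: "z \<in> A"
      then have "z \<in> A' \<union> B' \<union> {g 0, g t}" using arcs(1) gamma by auto
      moreover have "z \<notin> A' \<or> z \<in> {g 0, g t}" using z 2 arcs(2) by auto
      ultimately show "z \<in> g' ` {t'..1}" unfolding AB' by auto
    qed
    moreover have "g' ` {0..t'} \<subseteq> B" "g' ` {t'..1} \<subseteq> A" unfolding AB' using 2 arcs(2) by auto
    ultimately show ?thesis unfolding A_def B_def by auto
  qed
qed

lemma winding_number_arcs_swapped:
  assumes sg: "simple_path g" "pathfinish g = pathstart g"
    and sg': "simple_path g'" "pathfinish g' = pathstart g'"
    and same: "g' 0 = g 0" "g' t' = g t"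
    and t: "0 < t" "t < 1" and t': "0 < t'" "t' < 1"
    and swap: "g' ` {0..t'} = g ` {t..1}" "g' ` {t'..1} = g ` {0..t}"
    and w: "w \<notin> path_image g"
  shows "winding_number g' w = - winding_number g w"
proof -
  have pg: "path g" "path g'" using sg(1) sg'(1) by (auto intro: simple_path_imp_path)
  have g1: "g 1 = g 0" "g' 1 = g 0"
    using sg(2) sg'(2) same(1) by (auto simp: pathfinish_def pathstart_def)
  have "g 0 \<noteq> g t" using simple_path_eq_interior_param[OF sg(1), of t 0] t by auto
  then have arcs: "arc (subpath 0 t g)" "arc (subpath t 1 g)"
    using arc_simple_path_subpath[OF sg(1)] t g1 by auto
  have img: "path_image (subpath 0 t g) = g ` {0..t}" "path_image (subpath t 1 g) = g ` {t..1}"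
    "path_image (subpath 0 t' g') = g ` {t..1}" "path_image (subpath t' 1 g') = g ` {0..t}"
    using t t' swap by (auto simp: path_image_subpath)
  have wA: "w \<notin> g ` {0..t}" "w \<notin> g ` {t..1}" using w t by (auto simp: path_image_def)
  have sub: "g ` {0..t} \<subseteq> - {w}" "g ` {t..1} \<subseteq> - {w}" using wA by auto
  have pps: "path (subpath 0 t g)" "path (subpath t 1 g)" "path (subpath 0 t' g')" "path (subpath t' 1 g')"
    using pg t t' by auto
  have "homotopic_paths (g ` {t..1}) (subpath 0 t' g') (reversepath (subpath t 1 g))"
    using homotopic_paths_in_arc_image[OF arcs(2)] pps img same g1 by auto
  then have "winding_number (subpath 0 t' g') w = winding_number (reversepath (subpath t 1 g)) w"
    by (rule winding_number_homotopic_paths[OF homotopic_paths_subset[OF _ sub(2)]])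
  also have "\<dots> = - winding_number (subpath t 1 g) w"
    by (rule winding_number_reversepath) (use pps img wA in auto)
  finally have 1: "winding_number (subpath 0 t' g') w = - winding_number (subpath t 1 g) w" .
  have "homotopic_paths (g ` {0..t}) (subpath t' 1 g') (reversepath (subpath 0 t g))"
    using homotopic_paths_in_arc_image[OF arcs(1)] pps img same g1 by auto
  then have "winding_number (subpath t' 1 g') w = winding_number (reversepath (subpath 0 t g)) w"
    by (rule winding_number_homotopic_paths[OF homotopic_paths_subset[OF _ sub(1)]])
  also have "\<dots> = - winding_number (subpath 0 t g) w"
    by (rule winding_number_reversepath) (use pps img wA in auto)
  finally have 2: "winding_number (subpath t' 1 g') w = - winding_number (subpath 0 t g) w" .
  have "path_image g' = g ` {t..1} \<union> g ` {0..t}"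
    using swap t' image_Un[of g' "{0..t'}" "{t'..1}"] by (simp add: path_image_def ivl_disj_un_two_touch(4))
  then have w': "w \<notin> path_image g'" using wA by auto
  have "winding_number g' w = - (winding_number (subpath 0 t g) w + winding_number (subpath t 1 g) w)"
    using winding_number_subpath_combine[OF pg(2) w', of 0 t' 1] 1 2 t' by (simp add: algebra_simps)
  also have "\<dots> = - winding_number g w"
    using winding_number_subpath_combine[OF pg(1) w, of 0 t 1] t by simp
  finally show ?thesis .
qed

lemma clockwise_param_initial_arc_unique:
  assumes g: "clockwise_param \<gamma> g" and g': "clockwise_param \<gamma> g'"
    and same: "g' 0 = g 0" "g' t' = g t"
    and t: "0 < t" "t < 1" and t': "0 < t'" "t' < 1"
  shows "g' ` {0..t'} = g ` {0..t}"
proof (rule ccontr)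
  assume "g' ` {0..t'} \<noteq> g ` {0..t}"
  then have swap: "g' ` {0..t'} = g ` {t..1}" "g' ` {t'..1} = g ` {0..t}"
    using simple_loop_initial_arc_cases[of g g' t' t] g g' same t t' by (auto simp: clockwise_param_def)
  have sg: "simple_path g" "pathfinish g = pathstart g" "path_image g = \<gamma>"
    and sg': "simple_path g'" "pathfinish g' = pathstart g'"
    using g g' by (auto simp: clockwise_param_def)
  obtain w where w: "w \<in> inside \<gamma>"
    using Jordan_inside_outside[OF sg(1,2)] sg(3) by auto
  have "w \<notin> path_image g" using w sg(3) inside_no_overlap by blast
  then have "winding_number g' w = - winding_number g w"
    by (rule winding_number_arcs_swapped[OF sg(1,2) sg' same t t' swap])
  then show False using g g' w by (simp add: clockwise_param_def)
qed

section \<open>Winding numbers along arcs\<close>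

lemma winding_number_subpath_diff:
  assumes "path g" "w \<notin> path_image g" "a \<in> {0..1}" "b \<in> {0..1}"
  shows "winding_number (subpath a b g) w = winding_number (subpath 0 b g) w - winding_number (subpath 0 a g) w"
  using winding_number_subpath_combine[OF assms(1,2), of 0 a b] assms(3,4) by (simp add: algebra_simps)

text \<open>The path below is the arc of the loop from \<open>g u\<close> forwards to \<open>g v\<close>; the correction term
  appears because this arc passes through \<open>g 0\<close> exactly when \<open>v < u\<close>.\<close>

lemma winding_number_subpath_shiftpath:
  assumes pg: "path g" and cg: "pathfinish g = pathstart g" and w: "w \<notin> path_image g"
    and u: "0 \<le> u" "u < 1" and v: "0 \<le> v" "v < 1" and uv: "u \<noteq> v"
    and d: "d = (if u < v then v - u else 1 + v - u)"
  shows "winding_number (subpath 0 d (shiftpath u g)) w =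
         winding_number (subpath 0 v g) w - winding_number (subpath 0 u g) w
           + (if u < v then 0 else winding_number g w)"
proof -
  define f where "f = shiftpath u g"
  have pf: "path f" unfolding f_def by (rule path_shiftpath[OF pg cg]) (use u in auto)
  have wf: "w \<notin> path_image f"
    using w path_image_shiftpath[OF _ cg, of u] u unfolding f_def by auto
  have g10: "g 1 = g 0" using cg by (simp add: pathfinish_def pathstart_def)
  show ?thesis
  proof (cases "u < v")
    case True
    then have dd: "d = v - u" using d by simp
    have "winding_number (subpath 0 d f) w = winding_number (subpath u v g) w"
    proof (rule winding_number_cong)
      fix x :: real assume "0 \<le> x" "x \<le> 1"
      then have "u + (v - u) * x \<le> 1" using True v mult_left_le[of x "v - u"] by linarith
      then show "subpath 0 d f x = subpath u v g x"
        unfolding subpath_def f_def shiftpath_def dd by (simp add: algebra_simps)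
    qed
    also have "\<dots> = winding_number (subpath 0 v g) w - winding_number (subpath 0 u g) w"
      by (rule winding_number_subpath_diff[OF pg w]) (use u v in auto)
    finally show ?thesis using True unfolding f_def by simp
  next
    case False
    then have vu: "v < u" using uv by auto
    then have dd: "d = 1 + v - u" using d by simp
    define c where "c = 1 - u"
    have c: "0 < c" "c \<le> d" "d < 1" using u v vu unfolding c_def dd by auto
    have e1: "winding_number (subpath 0 c f) w = winding_number (subpath u 1 g) w"
    proof (rule winding_number_cong)
      fix x :: real assume "0 \<le> x" "x \<le> 1"
      then have "u + (1 - u) * x \<le> 1" using u mult_left_le[of x "1 - u"] by linarith
      then show "subpath 0 c f x = subpath u 1 g x"
        unfolding subpath_def f_def shiftpath_def c_def by (simp add: algebra_simps)
    qed
    have e2: "winding_number (subpath c d f) w = winding_number (subpath 0 v g) w"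
    proof (rule winding_number_cong)
      fix x :: real assume x: "0 \<le> x" "x \<le> 1"
      have arg: "(d - c) * x + c = 1 - u + v * x" unfolding dd c_def by (simp add: algebra_simps)
      have "0 \<le> v * x" using v x by simp
      show "subpath c d f x = subpath 0 v g x"
      proof (cases "v * x = 0")
        case True
        then show ?thesis using g10 unfolding subpath_def f_def shiftpath_def arg by (simp add: True)
      next
        case False
        then have "0 < v * x" using \<open>0 \<le> v * x\<close> by linarith
        then show ?thesis unfolding subpath_def f_def shiftpath_def arg by (simp add: algebra_simps)
      qed
    qed
    have "winding_number (subpath 0 d f) w = winding_number (subpath 0 c f) w + winding_number (subpath c d f) w"
      using winding_number_subpath_combine[OF pf wf, of 0 c d] c by simp
    also have "\<dots> = winding_number g w - winding_number (subpath 0 u g) w + winding_number (subpath 0 v g) w"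
      using e1 e2 winding_number_subpath_diff[OF pg w, of u 1] u by simp
    finally show ?thesis using vu unfolding f_def by simp
  qed
qed

lemma winding_number_join_subpath_diff:
  assumes pa: "path a" and pg: "path g" and g10: "g 1 = g 0"
    and a1: "pathfinish a = g 0" and d: "0 \<le> d" "d \<le> 1"
    and x: "x \<notin> path_image a" "x \<notin> path_image g"
  shows "winding_number (a +++ subpath 0 d g) x - winding_number g x =
           winding_number (a +++ reversepath (subpath d 1 g)) x"
proof -
  have xb: "x \<notin> path_image (subpath 0 d g)" "x \<notin> path_image (subpath d 1 g)"
    using x(2) path_image_subpath_subset[of 0 d g] path_image_subpath_subset[of d 1 g] d by auto
  have "winding_number (a +++ subpath 0 d g) x = winding_number a x + winding_number (subpath 0 d g) x"
    by (rule winding_number_join) (use pa pg x xb a1 d in auto)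
  moreover have "winding_number (a +++ reversepath (subpath d 1 g)) x =
      winding_number a x - winding_number (subpath d 1 g) x"
    using winding_number_join[of a x "reversepath (subpath d 1 g)"] winding_number_reversepath[of "subpath d 1 g" x]
      pa pg x xb a1 g10 d by auto
  moreover have "winding_number g x = winding_number (subpath 0 d g) x + winding_number (subpath d 1 g) x"
    using winding_number_subpath_combine[OF pg x(2), of 0 d 1] d by simp
  ultimately show ?thesis by (simp add: algebra_simps)
qed

text \<open>Close the initial arc \<open>g ` {0..d}\<close> of a clockwise loop by a path \<open>a\<close> running outside the loop.
  Near an interior point of the remaining arc \<open>g ` {d..1}\<close>, which \<open>a\<close> avoids, the winding
  number of the closed path \<open>a +++ reversepath (subpath d 1 g)\<close> is locally constant, so crossing the loop
  changes the winding number of \<open>a +++ subpath 0 d g\<close> exactly as it changes that of \<open>g\<close>.\<close>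

lemma winding_number_join_across_loop:
  fixes a g :: "real \<Rightarrow> complex"
  assumes g: "clockwise_param \<gamma> g" and d: "0 < d" "d < 1"
    and pa: "path a" and a0: "pathstart a = g d" and a1: "pathfinish a = g 0"
    and Ag: "path_image a \<inter> \<gamma> \<subseteq> {g 0, g d}"
  obtains p q where "p \<in> inside \<gamma>" "q \<in> outside \<gamma>" "p \<notin> path_image a" "q \<notin> path_image a"
    "winding_number (a +++ subpath 0 d g) q = winding_number (a +++ subpath 0 d g) p + 1"
proof -
  define b where "b = subpath 0 d g"
  define r where "r = subpath d 1 g"
  define \<delta> where "\<delta> = a +++ reversepath r"
  have sg: "simple_path g" and cg: "pathfinish g = pathstart g" and ig: "path_image g = \<gamma>"
    and wg: "\<forall>w\<in>inside \<gamma>. winding_number g w = -1" using g by (auto simp: clockwise_param_def)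
  have pg: "path g" using sg by (rule simple_path_imp_path)
  have g10: "g 1 = g 0" using cg by (simp add: pathfinish_def pathstart_def)
  have pb: "path b" "path r" unfolding b_def r_def using pg d by auto
  have sb: "pathstart b = g 0" "pathfinish b = g d" "pathstart r = g d" "pathfinish r = g 0"
    unfolding b_def r_def using g10 by auto
  have pd: "path \<delta>" "pathfinish \<delta> = pathstart \<delta>" unfolding \<delta>_def using pa pb a0 a1 sb by auto
  have id: "path_image \<delta> = path_image a \<union> path_image r" unfolding \<delta>_def
    by (subst path_image_join) (use a1 sb in auto)
  define y where "y = g (d/2)"
  have yg: "y \<in> \<gamma>" unfolding y_def using ig d by (auto simp: path_image_def)
  have "y \<noteq> g 0" "y \<noteq> g d"
    using simple_path_eq_interior_param[OF sg, of "d/2" 0] simple_path_eq_interior_param[OF sg, of "d/2" d] d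
    unfolding y_def by auto
  then have yA: "y \<notin> path_image a" using Ag yg by blast
  have yR: "y \<notin> path_image r"
  proof
    assume "y \<in> path_image r"
    then obtain x where x: "x \<in> {d..1}" "y = g x" unfolding r_def using d by (auto simp: path_image_subpath)
    have "d/2 = x" by (rule simple_path_eq_interior_param[OF sg]) (use x d in \<open>auto simp: y_def\<close>)
    then show False using x d by auto
  qed
  have "open (- path_image \<delta>)" using closed_path_image[OF pd(1)] by auto
  moreover have "y \<in> - path_image \<delta>" using yA yR id by auto
  ultimately obtain e where e: "e > 0" "ball y e \<subseteq> - path_image \<delta>" by (meson open_contains_ball)
  note J = Jordan_inside_outside[OF sg cg, unfolded ig]
  have "y \<in> closure (inside \<gamma>)" "y \<in> closure (outside \<gamma>)" using yg J unfolding frontier_def by blast+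
  then obtain p q where p: "p \<in> inside \<gamma>" "dist p y < e" and q: "q \<in> outside \<gamma>" "dist q y < e"
    using e(1) by (meson closure_approachable)
  have pball: "p \<in> ball y e" "q \<in> ball y e" using p q by (auto simp: dist_commute)
  have pq\<gamma>: "p \<notin> \<gamma>" "q \<notin> \<gamma>" using p(1) q(1) inside_no_overlap outside_no_overlap by blast+
  have pqA: "p \<notin> path_image a" "q \<notin> path_image a" using pball e(2) id by auto
  have decomp: "winding_number (a +++ b) x - winding_number g x = winding_number \<delta> x"
    if "x \<notin> path_image a" "x \<notin> \<gamma>" for x
    using winding_number_join_subpath_diff[OF pa pg g10 a1 _ _ that(1)] that(2) ig d
    unfolding b_def \<delta>_def r_def by simp
  have "winding_number \<delta> p = winding_number \<delta> q"
    by (rule winding_number_eq[OF pd pball]) (use e(2) in auto)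
  moreover have "winding_number g p = -1" using wg p(1) by simp
  moreover have "winding_number g q = 0"
    by (rule winding_number_zero_in_outside[OF pg cg]) (use q(1) ig in simp)
  ultimately have "winding_number (a +++ b) q = winding_number (a +++ b) p + 1"
    using decomp[OF pqA(1) pq\<gamma>(1)] decomp[OF pqA(2) pq\<gamma>(2)] by (simp add: algebra_simps)
  then show ?thesis using that p(1) q(1) pqA unfolding b_def by blast
qed

lemma inside_subset_inside_join_outer_path:
  fixes a g :: "real \<Rightarrow> complex"
  assumes g: "clockwise_param \<gamma> g" and d: "0 < d" "d < 1"
    and pa: "path a" and a0: "pathstart a = g d" and a1: "pathfinish a = g 0"
    and Ag: "path_image a \<inter> \<gamma> \<subseteq> {g 0, g d}" and Ai: "path_image a \<inter> inside \<gamma> = {}"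
    and cw: "clockwise_param (path_image (a +++ subpath 0 d g)) (a +++ subpath 0 d g)"
  shows "inside \<gamma> \<subseteq> inside (path_image (a +++ subpath 0 d g))"
proof -
  define \<zeta> where "\<zeta> = a +++ subpath 0 d g"
  have sz: "simple_path \<zeta>" "pathfinish \<zeta> = pathstart \<zeta>"
    and wz: "\<forall>w\<in>inside (path_image \<zeta>). winding_number \<zeta> w = -1"
    using cw unfolding \<zeta>_def clockwise_param_def by auto
  have pz: "path \<zeta>" using sz(1) by (rule simple_path_imp_path)
  have ig: "path_image g = \<gamma>" and sg: "simple_path g" "pathfinish g = pathstart g"
    using g by (auto simp: clockwise_param_def)
  have iz: "path_image \<zeta> \<subseteq> path_image a \<union> \<gamma>"
    unfolding \<zeta>_def using path_image_join_subset path_image_subpath_subset[of 0 d g] ig d by fastforce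
  obtain p q where p: "p \<in> inside \<gamma>" and q: "q \<in> outside \<gamma>" and pqA: "p \<notin> path_image a" "q \<notin> path_image a"
    and pq: "winding_number \<zeta> q = winding_number \<zeta> p + 1"
    using winding_number_join_across_loop[OF g d pa a0 a1 Ag] unfolding \<zeta>_def by blast
  have pqz: "p \<notin> path_image \<zeta>" "q \<notin> path_image \<zeta>"
    using iz pqA p q inside_no_overlap outside_no_overlap by blast+
  have vals: "winding_number \<zeta> x = -1 \<and> x \<in> inside (path_image \<zeta>) \<or> winding_number \<zeta> x = 0"
    if "x \<notin> path_image \<zeta>" for x
    using wz winding_number_zero_in_outside[OF pz sz(2)] Jordan_inside_outside[OF sz] that by blast
  have "winding_number \<zeta> p = -1"
    using vals[OF pqz(1)] vals[OF pqz(2)] pq by auto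
  show ?thesis
  proof
    fix w assume w: "w \<in> inside \<gamma>"
    have Iz: "inside \<gamma> \<inter> path_image \<zeta> = {}" using iz Ai inside_no_overlap[of \<gamma>] by blast
    have "winding_number \<zeta> w = winding_number \<zeta> p"
      by (rule winding_number_eq[OF pz sz(2) w p]) (use Jordan_inside_outside[OF sg] ig Iz in auto)
    then show "w \<in> inside (path_image (a +++ subpath 0 d g))"
      using vals[of w] \<open>winding_number \<zeta> p = -1\<close> w Iz unfolding \<zeta>_def by auto
  qed
qed

lemma shiftpath_image_interval:
  assumes "0 \<le> a" "a \<le> b" "b \<le> 1"
  shows "shiftpath a g ` {0..b-a} = g ` {a..b}" "shiftpath a g ` {0<..<b-a} = g ` {a<..<b}"
    "shiftpath a g (b - a) = g b"
proof -
  have e: "shiftpath a g x = g (a + x)" if "x \<le> b - a" for x using that assms by (simp add: shiftpath_def)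
  have "shiftpath a g ` (\<lambda>x. x - a) ` I = g ` I" if "I \<subseteq> {a..b}" for I
    unfolding image_image using e that by (auto intro!: image_cong)
  moreover have "(\<lambda>x. x - a) ` {a..b} = {0..b-a}" "(\<lambda>x. x - a) ` {a<..<b} = {0<..<b-a}"
    by (auto simp: image_iff intro!: bexI[of _ "_ + a"])
  ultimately show "shiftpath a g ` {0..b-a} = g ` {a..b}" "shiftpath a g ` {0<..<b-a} = g ` {a<..<b}"
    by (metis greaterThanLessThan_subseteq_atLeastAtMost_iff order_refl)+
  show "shiftpath a g (b - a) = g b" using e[of "b - a"] by simp
qed

section \<open>Loops in a disk of the sphere\<close>

lemma components_eq_two_openin:
  assumes S: "S = P \<union> Q" and PQ: "P \<inter> Q = {}" "P \<noteq> {}" "Q \<noteq> {}" "connected P" "connected Q"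
    and oP: "openin (top_of_set S) P" and oQ: "openin (top_of_set S) Q"
  shows "components S = {P, Q}"
proof -
  obtain UP UQ where UP: "open UP" "P = S \<inter> UP" and UQ: "open UQ" "Q = S \<inter> UQ"
    using oP oQ by (auto simp: openin_open)
  have max: "D = C" if C: "C = P \<or> C = Q" and D: "connected D" "C \<subseteq> D" "D \<subseteq> S" for C D
  proof -
    have "\<not> (D \<inter> P \<noteq> {} \<and> D \<inter> Q \<noteq> {})"
    proof
      assume ne: "D \<inter> P \<noteq> {} \<and> D \<inter> Q \<noteq> {}"
      have "openin (top_of_set D) (D \<inter> UP)" "openin (top_of_set D) (D \<inter> UQ)"
        using UP UQ by (auto intro: openin_open_Int)
      moreover have "D \<inter> UP = D \<inter> P" "D \<inter> UQ = D \<inter> Q" using UP UQ D by auto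
      moreover have "D \<subseteq> (D \<inter> P) \<union> (D \<inter> Q)" "(D \<inter> P) \<inter> (D \<inter> Q) = {}" using D(3) S PQ(1) by blast+
      ultimately show False using D(1) ne unfolding connected_openin by metis
    qed
    then show ?thesis using C D S PQ(2,3) by blast
  qed
  have cP: "P \<in> components S" and cQ: "Q \<in> components S"
    unfolding in_components_maximal using PQ S max by auto
  have "C \<in> {P, Q}" if C: "C \<in> components S" for C
  proof -
    have "C \<inter> P \<noteq> {} \<or> C \<inter> Q \<noteq> {}"
      using in_components_nonempty[OF C] in_components_subset[OF C] S by auto
    then show ?thesis using components_eq[OF C cP] components_eq[OF C cQ] by auto
  qed
  then show ?thesis using cP cQ by auto
qed

lemma inside_subset_interior_convex:
  fixes S T :: "'a::{real_normed_vector, perfect_space} set"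
  assumes "closed S" "convex T" "S \<subseteq> T"
  shows "inside S \<subseteq> interior T"
proof -
  have "inside S \<subseteq> T" using outside_subset_convex[OF assms(2,3)] inside_Int_outside by blast
  then show ?thesis by (rule interior_maximal) (rule open_inside[OF assms(1)])
qed

text \<open>Invariance of domain makes the image of the inside open; it is bounded, and its closure adds
  only points of the image curve, so it is clopen in both components of the complement of that
  curve and hence equal to the bounded one.\<close>

lemma inside_image_simple_loop:
  fixes \<phi> :: "complex \<Rightarrow> complex"
  assumes sc: "simple_path c" and cc: "pathfinish c = pathstart c"
    and \<phi>: "continuous_on (inside (path_image c) \<union> path_image c) \<phi>"
      "inj_on \<phi> (inside (path_image c) \<union> path_image c)"
  shows "\<phi> ` inside (path_image c) = inside (\<phi> ` path_image c)"
proof -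
  define I where "I = inside (path_image c)"
  define \<Gamma> where "\<Gamma> = \<phi> ` path_image c"
  define S where "S = \<phi> ` I"
  note J = Jordan_inside_outside[OF sc cc, folded I_def]
  note \<phi>I = \<phi>[folded I_def]
  have \<phi>_I: "continuous_on I \<phi>" "inj_on \<phi> I"
    using continuous_on_subset[OF \<phi>I(1)] inj_on_subset[OF \<phi>I(2)] by auto
  have "simple_path (\<phi> \<circ> c)"
    by (rule simple_path_continuous_image[OF sc]) (use \<phi> in \<open>auto elim: continuous_on_subset inj_on_subset\<close>)
  moreover have "pathfinish (\<phi> \<circ> c) = pathstart (\<phi> \<circ> c)" using cc by (simp add: pathfinish_compose pathstart_compose)
  ultimately have JG: "inside \<Gamma> \<inter> outside \<Gamma> = {}" "inside \<Gamma> \<union> outside \<Gamma> = - \<Gamma>"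
    "connected (inside \<Gamma>)" "connected (outside \<Gamma>)" "\<not> bounded (outside \<Gamma>)"
    using Jordan_inside_outside[of "\<phi> \<circ> c"] unfolding \<Gamma>_def path_image_compose by auto
  have clI: "closure I = I \<union> path_image c" using J by (simp add: closure_Un_frontier)
  have oS: "open S" unfolding S_def
    by (rule invariance_of_domain) (use J \<phi>_I in auto)
  have "compact (\<phi> ` (I \<union> path_image c))"
    using J clI \<phi>I(1) by (metis compact_closure compact_continuous_image)
  then have cpt: "compact (S \<union> \<Gamma>)" unfolding S_def \<Gamma>_def image_Un .
  then have bS: "bounded S" using bounded_subset compact_imp_bounded by blast
  have clS: "closure S \<subseteq> S \<union> \<Gamma>"
    using closure_minimal[OF _ compact_imp_closed[OF cpt], of S] by blast
  have S\<Gamma>: "S \<inter> \<Gamma> = {}"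
    using inj_on_image_Int[OF \<phi>I(2), of I "path_image c"] inside_no_overlap[of "path_image c"]
    unfolding S_def \<Gamma>_def I_def by auto
  have clopen: "T \<inter> S = {} \<or> T \<subseteq> S" if "connected T" "T \<inter> \<Gamma> = {}" for T
  proof -
    have "openin (top_of_set T) (T \<inter> S)" using oS by (rule openin_open_Int)
    moreover have "T \<inter> S = T \<inter> closure S" using clS closure_subset[of S] that(2) by auto
    then have "closedin (top_of_set T) (T \<inter> S)" by (simp add: closedin_closed_Int)
    ultimately show ?thesis using that(1) unfolding connected_clopen by blast
  qed
  have "outside \<Gamma> \<inter> S = {}"
    using clopen[OF JG(4)] JG(1,2,5) bS bounded_subset by blast
  then have "S \<subseteq> inside \<Gamma>" using S\<Gamma> JG(2) by blast
  moreover have "S \<noteq> {}" using J unfolding S_def by auto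
  ultimately have "S = inside \<Gamma>" using clopen[OF JG(3)] JG(2) by blast
  then show ?thesis unfolding S_def I_def \<Gamma>_def .
qed

lemma closure_image_unbounded_punctured:
  fixes G :: "'b::real_normed_vector \<Rightarrow> 'a::metric_space"
  assumes FG: "homeomorphism (S - {q}) UNIV F G" and S: "compact S" and U: "\<not> bounded U"
  shows "q \<in> closure (G ` U)"
proof (rule ccontr)
  assume nq: "q \<notin> closure (G ` U)"
  have FG1: "\<And>y. F (G y) = y" and GS: "G ` U \<subseteq> S - {q}" and Fc: "continuous_on (S - {q}) F"
    using FG unfolding homeomorphism_def by auto
  have "closure (G ` U) \<subseteq> S" using closure_minimal[of "G ` U" S] GS compact_imp_closed[OF S] by blast
  then have K: "closure (G ` U) \<subseteq> S - {q}" using nq by blast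
  have "compact (S \<inter> closure (G ` U))" using S by (simp add: compact_Int_closed)
  moreover have "S \<inter> closure (G ` U) = closure (G ` U)" using K by blast
  ultimately have "compact (closure (G ` U))" by simp
  then have "bounded (F ` closure (G ` U))"
    by (intro compact_imp_bounded compact_continuous_image continuous_on_subset[OF Fc K])
  moreover have "U \<subseteq> F ` closure (G ` U)"
    using FG1 closure_subset[of "G ` U"] by (auto intro!: image_eqI[where f = F])
  ultimately show False using U bounded_subset by blast
qed

lemma openin_punctured_image:
  fixes G :: "'b::topological_space \<Rightarrow> 'a::t1_space"
  assumes FG: "homeomorphism (S - {q}) UNIV F G" and U: "open U"
  shows "openin (top_of_set S) (G ` U)"
proof -
  have GF: "\<And>x. x \<in> S - {q} \<Longrightarrow> G (F x) = x" and FG1: "\<And>y. F (G y) = y" and GS: "G ` UNIV = S - {q}"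
    and Fc: "continuous_on (S - {q}) F"
    using FG unfolding homeomorphism_def by auto
  have "openin (top_of_set (S - {q})) ((S - {q}) \<inter> F -` U)"
  proof (rule continuous_openin_preimage[OF Fc])
    show "openin (top_of_set UNIV) U" unfolding subtopology_UNIV open_openin[symmetric] by (rule U)
  qed simp
  moreover have "(S - {q}) \<inter> F -` U = G ` U"
  proof
    show "(S - {q}) \<inter> F -` U \<subseteq> G ` U"
    proof
      fix x assume x: "x \<in> (S - {q}) \<inter> F -` U"
      then have "x = G (F x)" using GF by simp
      then show "x \<in> G ` U" using x by blast
    qed
    show "G ` U \<subseteq> (S - {q}) \<inter> F -` U" using FG1 GS by auto
  qed
  ultimately show ?thesis
    using openin_trans[OF _ openin_delete[OF openin_subtopology_self, of S q]] by simp
qed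

text \<open>Removing a point \<open>q\<close> off the loop turns the sphere into the plane: the component of the
  complement containing \<open>q\<close> is the outside of the plane curve with \<open>q\<close> added back.\<close>

lemma loop_regions_punctured_image:
  fixes F :: "real^3 \<Rightarrow> complex"
  assumes q: "q \<in> S2" and FG: "homeomorphism (S2 - {q}) UNIV F G"
    and sc: "simple_path c" and cc: "pathfinish c = pathstart c"
  shows "loop_regions (G ` path_image c) =
           {G ` (inside (path_image c) \<union> path_image c), S2 - G ` inside (path_image c)}"
proof -
  define \<Gamma> where "\<Gamma> = path_image c"
  define L where "L = G ` \<Gamma>"
  define P where "P = G ` inside \<Gamma>"
  define Q where "Q = G ` outside \<Gamma> \<union> {q}"
  have GU: "G ` UNIV = S2 - {q}" and Gc: "continuous_on UNIV G"
    using FG unfolding homeomorphism_def by auto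
  have "\<And>y. F (G y) = y" using FG unfolding homeomorphism_def by auto
  then have Ginj: "inj G" by (metis injI)
  have S2: "compact S2" by (simp add: S2_def)
  have J: "inside \<Gamma> \<inter> outside \<Gamma> = {}" "inside \<Gamma> \<union> outside \<Gamma> = - \<Gamma>"
    "connected (inside \<Gamma>)" "connected (outside \<Gamma>)" "\<not> bounded (outside \<Gamma>)"
    "open (inside \<Gamma>)" "bounded (inside \<Gamma>)" "frontier (inside \<Gamma>) = \<Gamma>" "frontier (outside \<Gamma>) = \<Gamma>"
    "inside \<Gamma> \<noteq> {}" "outside \<Gamma> \<noteq> {}"
    using Jordan_inside_outside[OF sc cc] unfolding \<Gamma>_def by auto
  have qL: "q \<notin> L" and GS: "\<And>A. G ` A \<subseteq> S2 - {q}" using GU unfolding L_def by auto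
  have dec: "S2 - L = P \<union> Q"
  proof -
    have "G ` (- \<Gamma>) = S2 - {q} - L"
      using image_set_diff[OF Ginj, of UNIV \<Gamma>] GU unfolding L_def by (simp add: Compl_eq_Diff_UNIV[symmetric])
    moreover have "G ` (- \<Gamma>) = P \<union> G ` outside \<Gamma>"
      unfolding P_def image_Un[symmetric] using J by simp
    ultimately show ?thesis unfolding Q_def using q qL by blast
  qed
  have PQ: "P \<inter> Q = {}"
    using image_Int[OF Ginj, of "inside \<Gamma>" "outside \<Gamma>"] J GS[of "inside \<Gamma>"]
    unfolding P_def Q_def by auto
  have cG: "connected (G ` A)" if "connected A" for A
    by (rule connected_continuous_image[OF continuous_on_subset[OF Gc subset_UNIV] that])
  have cP: "connected P" unfolding P_def using cG J(3) .
  have "q \<in> closure (G ` outside \<Gamma>)" by (rule closure_image_unbounded_punctured[OF FG S2 J(5)])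
  then have "Q \<subseteq> closure (G ` outside \<Gamma>)" unfolding Q_def using closure_subset[of "G ` outside \<Gamma>"] by blast
  moreover have "G ` outside \<Gamma> \<subseteq> Q" unfolding Q_def by blast
  ultimately have cQ: "connected Q" using connected_intermediate_closure[OF cG[OF J(4)]] by blast
  have oP: "openin (top_of_set S2) P"
    unfolding P_def by (rule openin_punctured_image[OF FG J(6)])
  have cl\<Gamma>: "closure (inside \<Gamma>) = inside \<Gamma> \<union> \<Gamma>" "closure (outside \<Gamma>) = outside \<Gamma> \<union> \<Gamma>"
    using J(8,9) by (simp_all add: closure_Un_frontier)
  have "compact (inside \<Gamma> \<union> \<Gamma>)" using compact_closure[of "inside \<Gamma>"] J(7) cl\<Gamma>(1) by simp
  then have compJ: "compact (G ` (inside \<Gamma> \<union> \<Gamma>))"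
    by (rule compact_continuous_image[OF continuous_on_subset[OF Gc subset_UNIV]])
  have PL: "G ` (inside \<Gamma> \<union> \<Gamma>) = P \<union> L" unfolding P_def L_def by (simp add: image_Un)
  have oQ: "openin (top_of_set (S2 - L)) Q"
  proof -
    have "Q = (S2 - L) \<inter> - G ` (inside \<Gamma> \<union> \<Gamma>)" unfolding PL using dec PQ by blast
    moreover have "open (- G ` (inside \<Gamma> \<union> \<Gamma>))" using compact_imp_closed[OF compJ] by blast
    ultimately show ?thesis using openin_open_Int by metis
  qed
  have comps: "components (S2 - L) = {P, Q}"
  proof (rule components_eq_two_openin[OF dec PQ _ _ cP cQ _ oQ])
    show "P \<noteq> {}" "Q \<noteq> {}" using J unfolding P_def Q_def by auto
    show "openin (top_of_set (S2 - L)) P" using openin_subset_trans[OF oP] dec by blast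
  qed
  have "closure P = P \<union> L"
  proof
    show "closure P \<subseteq> P \<union> L"
      using closure_minimal[OF Un_upper1 compact_imp_closed[OF compJ[unfolded PL]]] .
    have "G ` closure (inside \<Gamma>) \<subseteq> closure P"
      unfolding P_def
      by (rule image_closure_subset[OF continuous_on_subset[OF Gc subset_UNIV] closed_closure closure_subset])
    then show "P \<union> L \<subseteq> closure P" using cl\<Gamma>(1) PL by simp
  qed
  moreover have "closure Q = S2 - P"
  proof
    have "closedin (top_of_set S2) (S2 - P)" using oP by (simp add: openin_closedin_eq)
    then have "closed (S2 - P)" using closedin_closed_trans[OF _ compact_imp_closed[OF S2]] by blast
    moreover have "Q \<subseteq> S2 - P" using dec PQ by blast
    ultimately show "closure Q \<subseteq> S2 - P" by (simp add: closure_minimal)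
    have "G ` closure (outside \<Gamma>) \<subseteq> closure (G ` outside \<Gamma>)"
      by (rule image_closure_subset[OF continuous_on_subset[OF Gc subset_UNIV] closed_closure closure_subset])
    moreover have "closure (G ` outside \<Gamma>) \<subseteq> closure Q" by (rule closure_mono) (auto simp: Q_def)
    ultimately have "L \<subseteq> closure Q" using cl\<Gamma>(2) unfolding L_def by auto
    then show "S2 - P \<subseteq> closure Q" using dec closure_subset[of Q] by blast
  qed
  moreover have "loop_regions L = {closure P, closure Q}" unfolding loop_regions_def comps by blast
  ultimately show ?thesis unfolding L_def \<Gamma>_def P_def image_Un by simp
qed

lemma homeomorphic_circle_imp_simple_loop:
  fixes S :: "'a::t2_space set"
  assumes "S homeomorphic sphere (0::complex) 1"
  obtains c where "simple_path c" "pathfinish c = pathstart c" "path_image c = S"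
proof -
  obtain f g where fg: "homeomorphism S (sphere (0::complex) 1) f g"
    using assms unfolding homeomorphic_def by blast
  then have "continuous_on (sphere 0 1) g" "inj_on g (sphere 0 1)" "g ` sphere 0 1 = S"
    unfolding homeomorphism_def by (auto intro: inj_on_inverseI)
  moreover have "simple_path (circlepath (0::complex) 1)" by (simp add: simple_path_circlepath)
  ultimately have "simple_path (g \<circ> circlepath 0 1)"
    using simple_path_continuous_image[of "circlepath 0 1" g] by simp
  then show ?thesis
    using that[of "g \<circ> circlepath 0 1"] \<open>g ` sphere 0 1 = S\<close>
    by (simp add: path_image_compose pathfinish_compose pathstart_compose)
qed

lemma oriented_disk_not_S2:
  assumes "oriented_disk h"
  obtains q where "q \<in> S2" "q \<notin> h ` cball 0 1"
proof -
  have hc: "continuous_on (cball 0 1) h" "inj_on h (cball 0 1)" "h ` cball 0 1 \<subseteq> S2"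
    using assms by (auto simp: oriented_disk_def)
  have "\<not> S2 \<subseteq> h ` cball 0 1"
  proof
    assume "S2 \<subseteq> h ` cball 0 1"
    then have "cball (0::complex) 1 homeomorphic S2"
      using homeomorphism_compact[OF compact_cball hc(1) refl hc(2)] hc(3) unfolding homeomorphic_def by auto
    then have "contractible S2"
      using homeomorphic_contractible convex_imp_contractible[OF convex_cball] by blast
    then show False unfolding S2_def by (simp add: contractible_sphere)
  qed
  then show ?thesis using that by auto
qed

lemma S2_punctured_homeomorphism:
  assumes "q \<in> S2"
  obtains F G where "homeomorphism (S2 - {q}) (UNIV :: complex set) F G"
proof -
  obtain c :: "real^3" where c: "c \<in> Basis" by (meson ex_in_conv nonempty_Basis)
  then have "c \<noteq> 0" by (auto simp: nonzero_Basis)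
  then have 1: "(S2 - {q}) homeomorphic {x. c \<bullet> x = 0}"
    using homeomorphic_punctured_sphere_hyperplane[of 1 q 0 c 0] assms by (auto simp: S2_def)
  have "{x::real^3. c \<bullet> x = 0} homeomorphic (UNIV :: complex set)"
    by (rule homeomorphic_affine_sets) (use \<open>c \<noteq> 0\<close> in \<open>auto simp: affine_hyperplane aff_dim_hyperplane\<close>)
  then show ?thesis using 1 homeomorphic_trans that unfolding homeomorphic_def by blast
qed

definition chart_preimage :: "(complex \<Rightarrow> real^3) \<Rightarrow> (real^3) set \<Rightarrow> complex set" where
  "chart_preimage h L = {z \<in> cball 0 1. h z \<in> L}"

lemma image_chart_preimage: "L \<subseteq> h ` cball 0 1 \<Longrightarrow> h ` chart_preimage h L = L"
  by (auto simp: chart_preimage_def)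

lemma chart_preimage_image: "inj_on h (cball 0 1) \<Longrightarrow> K \<subseteq> cball 0 1 \<Longrightarrow> chart_preimage h (h ` K) = K"
  by (fastforce simp: chart_preimage_def inj_on_def)

lemma chart_preimage_subset: "chart_preimage h L \<subseteq> cball 0 1"
  by (auto simp: chart_preimage_def)

lemma homeomorphism_chart:
  assumes "oriented_disk h" "K \<subseteq> cball 0 1"
  obtains k where "homeomorphism K (h ` K) h k"
proof -
  have "continuous_on (cball 0 1) h" "inj_on h (cball 0 1)" using assms(1) by (auto simp: oriented_disk_def)
  then obtain k where "homeomorphism (cball 0 1) (h ` cball 0 1) h k"
    using homeomorphism_compact[OF compact_cball] by blast
  then show ?thesis using that homeomorphism_of_subsets[of _ _ h k K] assms(2) by blast
qed

lemma loop_chart_preimage: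
  assumes disk: "oriented_disk h" and L: "is_loop L" "L \<subseteq> h ` cball 0 1"
  obtains c where "simple_path c" "pathfinish c = pathstart c" "path_image c = chart_preimage h L"
proof -
  obtain k where "homeomorphism (chart_preimage h L) L h k"
    using homeomorphism_chart[OF disk chart_preimage_subset] image_chart_preimage[OF L(2)] by metis
  then have "chart_preimage h L homeomorphic sphere (0::complex) 1"
    using L(1) homeomorphic_trans unfolding is_loop_def homeomorphic_def by blast
  then show ?thesis using homeomorphic_circle_imp_simple_loop that by blast
qed

lemma is_loop_chart_image:
  assumes disk: "oriented_disk h" and c: "simple_path c" "pathfinish c = pathstart c"
    and sub: "path_image c \<subseteq> cball 0 1"
  shows "is_loop (h ` path_image c)"
proof -
  obtain k where "homeomorphism (path_image c) (h ` path_image c) h k"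
    using homeomorphism_chart[OF disk sub] .
  then have "h ` path_image c homeomorphic sphere (0::complex) 1"
    using homeomorphic_simple_path_image_circle[OF c, of 1 0] homeomorphic_sym homeomorphic_trans
    unfolding homeomorphic_def by (metis zero_less_one)
  moreover have "h ` path_image c \<subseteq> S2" using disk sub by (auto simp: oriented_disk_def)
  ultimately show ?thesis unfolding is_loop_def by blast
qed

lemma loop_regions_chart:
  assumes disk: "oriented_disk h" and L: "is_loop L" "L \<subseteq> h ` cball 0 1"
  defines "\<gamma> \<equiv> chart_preimage h L"
  shows "inside \<gamma> \<subseteq> ball 0 1"
    and "loop_regions L = {h ` (inside \<gamma> \<union> \<gamma>), S2 - h ` inside \<gamma>}"
    and "disk_in (h ` cball 0 1) L = h ` (inside \<gamma> \<union> \<gamma>)"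
proof -
  have hc: "continuous_on (cball 0 1) h" "inj_on h (cball 0 1)" "h ` cball 0 1 \<subseteq> S2"
    using disk by (auto simp: oriented_disk_def)
  obtain c where sc: "simple_path c" "pathfinish c = pathstart c" and pc: "path_image c = \<gamma>"
    using loop_chart_preimage[OF disk L] unfolding \<gamma>_def by blast
  have \<gamma>cb: "\<gamma> \<subseteq> cball 0 1" unfolding \<gamma>_def by (rule chart_preimage_subset)
  show Iball: "inside \<gamma> \<subseteq> ball 0 1"
    using inside_subset_interior_convex[OF _ convex_cball \<gamma>cb] closed_path_image[OF simple_path_imp_path[OF sc(1)]] pc
    by simp
  then have Icb: "inside \<gamma> \<union> \<gamma> \<subseteq> cball 0 1" using \<gamma>cb by auto
  obtain q where q: "q \<in> S2" "q \<notin> h ` cball 0 1" using oriented_disk_not_S2[OF disk] by blast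
  obtain F G where FG: "homeomorphism (S2 - {q}) (UNIV :: complex set) F G"
    using S2_punctured_homeomorphism[OF q(1)] by blast
  have GF: "\<And>x. x \<in> S2 - {q} \<Longrightarrow> G (F x) = x" and Fc: "continuous_on (S2 - {q}) F"
    using FG unfolding homeomorphism_def by auto
  have hq: "h ` cball 0 1 \<subseteq> S2 - {q}" using hc(3) q by auto
  define \<phi> where "\<phi> = F \<circ> h"
  have GFh: "G ` \<phi> ` K = h ` K" if "K \<subseteq> cball 0 1" for K
    unfolding \<phi>_def image_comp[symmetric] image_image using GF hq that by (auto intro!: image_cong)
  have \<phi>c: "continuous_on (cball 0 1) \<phi>" unfolding \<phi>_def
    by (rule continuous_on_compose[OF hc(1) continuous_on_subset[OF Fc hq]])
  have \<phi>i: "inj_on \<phi> (cball 0 1)" unfolding \<phi>_def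
    using comp_inj_on[OF hc(2)] inj_on_subset[OF _ hq] GF by (metis inj_on_inverseI)
  have \<phi>in: "\<phi> ` inside \<gamma> = inside (\<phi> ` \<gamma>)"
    using inside_image_simple_loop[OF sc] continuous_on_subset[OF \<phi>c Icb] inj_on_subset[OF \<phi>i Icb] pc by simp
  have "simple_path (\<phi> \<circ> c)"
    using simple_path_continuous_image[OF sc(1)] continuous_on_subset[OF \<phi>c \<gamma>cb] inj_on_subset[OF \<phi>i \<gamma>cb] pc
    by simp
  moreover have "pathfinish (\<phi> \<circ> c) = pathstart (\<phi> \<circ> c)" using sc(2) by (simp add: pathfinish_compose pathstart_compose)
  ultimately have "loop_regions (G ` \<phi> ` \<gamma>) = {G ` (inside (\<phi> ` \<gamma>) \<union> \<phi> ` \<gamma>), S2 - G ` inside (\<phi> ` \<gamma>)}"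
    using loop_regions_punctured_image[OF q(1) FG, of "\<phi> \<circ> c"] pc by (simp add: path_image_compose)
  moreover have "G ` \<phi> ` \<gamma> = L" using GFh[OF \<gamma>cb] image_chart_preimage[OF L(2)] unfolding \<gamma>_def by simp
  moreover have "G ` inside (\<phi> ` \<gamma>) = h ` inside \<gamma>" using GFh[of "inside \<gamma>"] Icb \<phi>in by simp
  moreover have "h ` \<gamma> = L" using image_chart_preimage[OF L(2)] unfolding \<gamma>_def .
  ultimately show regs: "loop_regions L = {h ` (inside \<gamma> \<union> \<gamma>), S2 - h ` inside \<gamma>}"
    by (simp add: image_Un)
  show "disk_in (h ` cball 0 1) L = h ` (inside \<gamma> \<union> \<gamma>)"
    unfolding disk_in_def
  proof (rule the_equality)
    show "h ` (inside \<gamma> \<union> \<gamma>) \<in> loop_regions L \<and> h ` (inside \<gamma> \<union> \<gamma>) \<subseteq> h ` cball 0 1"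
      using regs Icb by auto
    fix D assume D: "D \<in> loop_regions L \<and> D \<subseteq> h ` cball 0 1"
    have "q \<in> S2 - h ` inside \<gamma>" using q Icb by auto
    then show "D = h ` (inside \<gamma> \<union> \<gamma>)" using D q(2) regs by auto
  qed
qed

lemma cw_param_iff_clockwise_param:
  assumes disk: "oriented_disk h" and L: "is_loop L" "L \<subseteq> h ` cball 0 1"
  shows "cw_param h L g \<longleftrightarrow> clockwise_param (chart_preimage h L) g"
proof -
  define \<gamma> where "\<gamma> = chart_preimage h L"
  note R = loop_regions_chart[OF disk L, folded \<gamma>_def]
  have inj: "inj_on h (cball 0 1)" using disk by (simp add: oriented_disk_def)
  have \<gamma>cb: "\<gamma> \<subseteq> cball 0 1" unfolding \<gamma>_def by (rule chart_preimage_subset)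
  have Icb: "inside \<gamma> \<union> \<gamma> \<subseteq> cball 0 1" using R(1) \<gamma>cb by auto
  have "w \<in> cball 0 1 \<and> h w \<notin> L" if "w \<in> inside \<gamma>" for w
    using that Icb inside_no_overlap[of \<gamma>] unfolding \<gamma>_def chart_preimage_def by blast
  moreover have "h w \<notin> L \<longleftrightarrow> w \<notin> \<gamma>" if "w \<in> cball 0 1" for w
    using that unfolding \<gamma>_def chart_preimage_def by blast
  ultimately have "(w \<in> cball 0 1 \<and> h w \<in> disk_in (h ` cball 0 1) L - L) \<longleftrightarrow> w \<in> inside \<gamma>" for w
    unfolding R(3) using inj_on_image_mem_iff[OF inj _ Icb, of w] by blast
  moreover have "(path_image g \<subseteq> cball 0 1 \<and> h ` path_image g = L) \<longleftrightarrow> path_image g = \<gamma>"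
    using chart_preimage_image[OF inj, of "path_image g"] image_chart_preimage[OF L(2)] \<gamma>cb
    unfolding \<gamma>_def by auto
  ultimately show ?thesis unfolding cw_param_def clockwise_param_def \<gamma>_def by blast
qed

lemma cw_param_initial_arcs:
  assumes disk: "oriented_disk h" and L: "is_loop L" "L \<subseteq> h ` cball 0 1"
    and g: "clockwise_param (chart_preimage h L) g" and t: "0 < t" "t < 1"
    and g': "cw_param h L g'" "h (pathstart g') = h (g 0)" "0 < t'" "t' < 1" "h (g' t') = h (g t)"
  shows "g' ` {0..t'} = g ` {0..t}" "g' ` {0<..<t'} = g ` {0<..<t}"
proof -
  have inj: "inj_on h (cball 0 1)" using disk by (simp add: oriented_disk_def)
  have gin: "f u \<in> cball 0 1" if "clockwise_param (chart_preimage h L) f" "u \<in> {0..1}" for f u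
    using that chart_preimage_subset unfolding clockwise_param_def path_image_def by blast
  have cg': "clockwise_param (chart_preimage h L) g'" using cw_param_iff_clockwise_param[OF disk L] g'(1) by simp
  have e: "g' 0 = g 0" "g' t' = g t"
    using inj_onD[OF inj] g'(2-5) t gin[OF g] gin[OF cg'] by (auto simp: pathstart_def)
  show "g' ` {0..t'} = g ` {0..t}"
    by (rule clockwise_param_initial_arc_unique[OF g cg' e t g'(3,4)])
  then show "g' ` {0<..<t'} = g ` {0<..<t}"
    using simple_path_open_arc[of g' 0 t'] simple_path_open_arc[of g 0 t] g cg' t g'(3,4) e
    by (simp add: clockwise_param_def)
qed

lemma cw_closed_seg_chart:
  assumes disk: "oriented_disk h" and L: "is_loop L" "L \<subseteq> h ` cball 0 1"
    and g: "clockwise_param (chart_preimage h L) g" and t: "0 < t" "t < 1"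
  shows "cw_closed_seg h L (h (g 0)) (h (g t)) = h ` g ` {0..t}"
proof
  note same = cw_param_initial_arcs(1)[OF disk L g t]
  have cg: "cw_param h L g" using cw_param_iff_clockwise_param[OF disk L] g by simp
  show "cw_closed_seg h L (h (g 0)) (h (g t)) \<subseteq> h ` g ` {0..t}"
  proof
    fix p assume "p \<in> cw_closed_seg h L (h (g 0)) (h (g t))"
    then obtain g' t' u where g': "cw_param h L g'" "h (pathstart g') = h (g 0)" "0 < t'" "t' < 1"
      "h (g' t') = h (g t)" "u \<in> {0..t'}" "p = h (g' u)"
      unfolding cw_closed_seg_def by auto
    then show "p \<in> h ` g ` {0..t}" using same[OF g'(1-5)] by blast
  qed
  show "h ` g ` {0..t} \<subseteq> cw_closed_seg h L (h (g 0)) (h (g t))"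
  proof
    fix p assume "p \<in> h ` g ` {0..t}"
    then obtain u where "u \<in> {0..t}" "p = h (g u)" by auto
    then have "cw_param h L g \<and> h (pathstart g) = h (g 0) \<and> 0 < t \<and> t < 1 \<and> h (g t) = h (g t) \<and>
        0 \<le> u \<and> u \<le> t \<and> p = h (g u)"
      using cg t by (simp add: pathstart_def)
    then show "p \<in> cw_closed_seg h L (h (g 0)) (h (g t))" unfolding cw_closed_seg_def by blast
  qed
qed

lemma cw_open_seg_chart:
  assumes disk: "oriented_disk h" and L: "is_loop L" "L \<subseteq> h ` cball 0 1"
    and g: "clockwise_param (chart_preimage h L) g" and t: "0 < t" "t < 1"
  shows "cw_open_seg h L (h (g 0)) (h (g t)) = h ` g ` {0<..<t}"
proof
  note same = cw_param_initial_arcs(2)[OF disk L g t]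
  have cg: "cw_param h L g" using cw_param_iff_clockwise_param[OF disk L] g by simp
  show "cw_open_seg h L (h (g 0)) (h (g t)) \<subseteq> h ` g ` {0<..<t}"
  proof
    fix p assume "p \<in> cw_open_seg h L (h (g 0)) (h (g t))"
    then obtain g' t' u where g': "cw_param h L g'" "h (pathstart g') = h (g 0)" "0 < t'" "t' < 1"
      "h (g' t') = h (g t)" "u \<in> {0<..<t'}" "p = h (g' u)"
      unfolding cw_open_seg_def by auto
    then show "p \<in> h ` g ` {0<..<t}" using same[OF g'(1-5)] by blast
  qed
  show "h ` g ` {0<..<t} \<subseteq> cw_open_seg h L (h (g 0)) (h (g t))"
  proof
    fix p assume "p \<in> h ` g ` {0<..<t}"
    then obtain u where "u \<in> {0<..<t}" "p = h (g u)" by auto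
    then have "cw_param h L g \<and> h (pathstart g) = h (g 0) \<and> 0 < t \<and> t < 1 \<and> h (g t) = h (g t) \<and>
        0 < u \<and> u < t \<and> p = h (g u)"
      using cg t by (simp add: pathstart_def)
    then show "p \<in> cw_open_seg h L (h (g 0)) (h (g t))" unfolding cw_open_seg_def by blast
  qed
qed

lemma cw_segs_chart_between:
  assumes disk: "oriented_disk h" and L: "is_loop L" "L \<subseteq> h ` cball 0 1"
    and g: "clockwise_param (chart_preimage h L) g" and ab: "0 \<le> a" "a < b" "b \<le> 1" "b - a < 1"
  shows "cw_closed_seg h L (h (g a)) (h (g b)) = h ` g ` {a..b}"
    and "cw_open_seg h L (h (g a)) (h (g b)) = h ` g ` {a<..<b}"
proof -
  have g': "clockwise_param (chart_preimage h L) (shiftpath a g)"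
    using clockwise_param_shiftpath[OF g] ab by simp
  have "shiftpath a g 0 = g a" using ab by (simp add: shiftpath_def)
  then show "cw_closed_seg h L (h (g a)) (h (g b)) = h ` g ` {a..b}"
    "cw_open_seg h L (h (g a)) (h (g b)) = h ` g ` {a<..<b}"
    using cw_closed_seg_chart[OF disk L g', of "b - a"] cw_open_seg_chart[OF disk L g', of "b - a"] shiftpath_image_interval[of a b g] ab by auto
qed

lemma non_crossing_chart:
  assumes disk: "oriented_disk h" and L: "is_loop L" "L \<subseteq> h ` cball 0 1"
    and K: "K \<subseteq> cball 0 1" "K \<inter> inside (chart_preimage h L) = {}"
  shows "non_crossing (h ` K) L"
proof -
  have inj: "inj_on h (cball 0 1)" and "h ` cball 0 1 \<subseteq> S2" using disk by (auto simp: oriented_disk_def)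
  then have "h ` K \<subseteq> S2" using K(1) by blast
  moreover have "inside (chart_preimage h L) \<subseteq> cball 0 1" using loop_regions_chart(1)[OF disk L] by auto
  then have "h ` K \<inter> h ` inside (chart_preimage h L) = {}"
    using inj_on_image_Int[OF inj K(1)] K(2) by (metis image_empty)
  ultimately have "h ` K \<subseteq> S2 - h ` inside (chart_preimage h L)" by blast
  then show ?thesis unfolding non_crossing_def using loop_regions_chart(2)[OF disk L] by blast
qed

lemma disk_in_chart_mono:
  assumes disk: "oriented_disk h" and L: "is_loop L" "L \<subseteq> h ` cball 0 1"
    and c: "simple_path c" "pathfinish c = pathstart c" "path_image c \<subseteq> cball 0 1"
    and sub: "inside (chart_preimage h L) \<subseteq> inside (path_image c)"
  shows "disk_in (h ` cball 0 1) L \<subseteq> disk_in (h ` cball 0 1) (h ` path_image c)"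
proof -
  have inj: "inj_on h (cball 0 1)" using disk by (simp add: oriented_disk_def)
  have Z: "is_loop (h ` path_image c)" "h ` path_image c \<subseteq> h ` cball 0 1"
    using is_loop_chart_image[OF disk c] c(3) by auto
  obtain c' where c': "simple_path c'" "pathfinish c' = pathstart c'" "path_image c' = chart_preimage h L"
    using loop_chart_preimage[OF disk L] .
  have "closure (inside (chart_preimage h L)) \<subseteq> closure (inside (path_image c))" using sub by (rule closure_mono)
  then have "inside (chart_preimage h L) \<union> chart_preimage h L \<subseteq> inside (path_image c) \<union> path_image c"
    using Jordan_inside_outside[OF c'(1,2)] Jordan_inside_outside[OF c(1,2)] c'(3)
    by (simp add: closure_Un_frontier)
  then show ?thesis
    unfolding loop_regions_chart(3)[OF disk L] loop_regions_chart(3)[OF disk Z]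
      chart_preimage_image[OF inj c(3)] by (rule image_mono)
qed

section \<open>Two loops meeting in nodes\<close>

text \<open>The nodes are \<open>g0 (s j)\<close> for \<open>j \<in> {1..k}\<close>; the extra value \<open>s (Suc k) = 1\<close> closes the last
  arc of \<open>g0\<close> at the first node.\<close>

locale node_loops =
  fixes g0 g1 :: "real \<Rightarrow> complex" and k :: nat and s :: "nat \<Rightarrow> real"
  assumes cw0: "clockwise_param (path_image g0) g0"
    and cw1: "clockwise_param (path_image g1) g1"
    and two_le_k: "2 \<le> k"
    and s_first: "s 1 = 0" and s_last: "s (Suc k) = 1"
    and s_mono: "\<And>i j. 1 \<le> i \<Longrightarrow> i < j \<Longrightarrow> j \<le> Suc k \<Longrightarrow> s i < s j"
begin

definition nxt :: "nat \<Rightarrow> nat" where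
  "nxt m = 1 + m mod k"

definition arc0 :: "nat \<Rightarrow> real \<Rightarrow> complex" where
  "arc0 m = subpath (s m) (s (Suc m)) g0"

lemma simple0: "simple_path g0" "pathfinish g0 = pathstart g0" "g0 1 = g0 0"
  and simple1: "simple_path g1" "pathfinish g1 = pathstart g1" "g1 1 = g1 0"
  using cw0 cw1 by (auto simp: clockwise_param_def pathfinish_def pathstart_def)

lemma s_le: "1 \<le> i \<Longrightarrow> i \<le> j \<Longrightarrow> j \<le> Suc k \<Longrightarrow> s i \<le> s j"
  using s_mono[of i j] by (cases "i = j") auto

lemma s_bounds:
  assumes "m \<in> {1..k}"
  shows "0 \<le> s m" "s m < s (Suc m)" "s (Suc m) \<le> 1" "s (Suc m) - s m < 1" "s m < 1"
proof -
  note le = s_le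
  show "0 \<le> s m" "s m < s (Suc m)" "s (Suc m) \<le> 1" "s m < 1"
    using le[of 1 m] s_mono[of m "Suc m"] le[of "Suc m" "Suc k"] s_mono[of m "Suc k"] assms s_first s_last
    by auto
  show "s (Suc m) - s m < 1"
  proof (cases "m = 1")
    case True
    then show ?thesis using s_mono[of 2 "Suc k"] two_le_k s_first s_last by (simp add: numeral_2_eq_2)
  next
    case False
    then show ?thesis using s_mono[of 1 m] le[of "Suc m" "Suc k"] assms s_first s_last by auto
  qed
qed

lemma nxt:
  assumes "m \<in> {1..k}"
  shows "nxt m \<in> {1..k}" "nxt m \<noteq> m" "g0 (s (nxt m)) = g0 (s (Suc m))"
proof -
  have "m < k \<and> nxt m = Suc m \<or> m = k \<and> nxt m = 1" using assms unfolding nxt_def by force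
  then show "nxt m \<in> {1..k}" "nxt m \<noteq> m" "g0 (s (nxt m)) = g0 (s (Suc m))"
    using assms two_le_k s_first s_last simple0(3) by auto
qed

lemma bij_nxt: "bij_betw nxt {1..k} {1..k}"
proof -
  have "inj_on nxt {1..k}"
  proof
    fix i j assume "i \<in> {1..k}" "j \<in> {1..k}" "nxt i = nxt j"
    then show "i = j" unfolding nxt_def
      by (cases "i = k"; cases "j = k") auto
  qed
  moreover have "nxt ` {1..k} \<subseteq> {1..k}" using nxt(1) by auto
  then have "nxt ` {1..k} = {1..k}" using endo_inj_surj[OF finite_atLeastAtMost _ calculation] by blast
  ultimately show ?thesis by (simp add: bij_betw_def)
qed

lemma node_eq_iff:
  assumes "i \<in> {1..k}" "j \<in> {1..k}"
  shows "g0 (s i) = g0 (s j) \<longleftrightarrow> i = j"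
proof
  assume "g0 (s i) = g0 (s j)"
  then have "s i = s j"
    using inj_onD[OF simple_path_inj_on_atLeastLessThan[OF simple0(1)]] s_bounds assms by auto
  then show "i = j" using s_mono[of i j] s_mono[of j i] assms by (cases i j rule: linorder_cases) auto
qed simp

lemma node_not_in_open_arc0:
  assumes "m \<in> {1..k}" "j \<in> {1..k}"
  shows "g0 (s j) \<notin> g0 ` {s m<..<s (Suc m)}"
proof
  assume "g0 (s j) \<in> g0 ` {s m<..<s (Suc m)}"
  then obtain r where r: "r \<in> {s m<..<s (Suc m)}" "g0 r = g0 (s j)" by auto
  then have "r = s j"
    using simple_path_eq_interior_param[OF simple0(1), of r "s j"] s_bounds[OF assms(1)] s_bounds[OF assms(2)]
    by auto
  moreover have "s j \<le> s m \<or> s (Suc m) \<le> s j"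
    using s_le[of j m] s_le[of "Suc m" j] assms by (cases "j \<le> m") auto
  ultimately show False using r by auto
qed

lemma open_arcs0_disjoint:
  assumes "i \<in> {1..k}" "j \<in> {1..k}" "i \<noteq> j"
  shows "g0 ` {s i<..<s (Suc i)} \<inter> g0 ` {s j<..<s (Suc j)} = {}"
proof -
  have "r \<noteq> r'" if "r \<in> {s i<..<s (Suc i)}" "r' \<in> {s j<..<s (Suc j)}" for r r'
    using that s_le[of "Suc i" j] s_le[of "Suc j" i] assms by (cases "i < j") auto
  moreover have "r = r'" if "r \<in> {s i<..<s (Suc i)}" "r' \<in> {s j<..<s (Suc j)}" "g0 r = g0 r'" for r r'
    using simple_path_eq_interior_param[OF simple0(1), of r r'] that s_bounds[OF assms(1)] s_bounds[OF assms(2)]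
    by auto
  ultimately show ?thesis by blast
qed

lemma arc0:
  assumes m: "m \<in> {1..k}"
  shows "path (arc0 m)" "arc (arc0 m)" "pathstart (arc0 m) = g0 (s m)" "pathfinish (arc0 m) = g0 (s (nxt m))"
    "path_image (arc0 m) = g0 ` {s m<..<s (Suc m)} \<union> {g0 (s m), g0 (s (nxt m))}"
    "path_image (arc0 m) \<subseteq> path_image g0"
proof -
  note sb = s_bounds[OF m]
  show "path (arc0 m)" unfolding arc0_def using simple_path_imp_path[OF simple0(1)] sb by simp
  show "pathstart (arc0 m) = g0 (s m)" "pathfinish (arc0 m) = g0 (s (nxt m))"
    unfolding arc0_def using nxt(3)[OF m] by auto
  have "g0 (s m) \<noteq> g0 (s (nxt m))" using node_eq_iff[OF m nxt(1)[OF m]] nxt(2)[OF m] by auto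
  then show "arc (arc0 m)"
    unfolding arc0_def using arc_simple_path_subpath[OF simple0(1)] sb nxt(3)[OF m] by auto
  have "{s m..s (Suc m)} = {s m<..<s (Suc m)} \<union> {s m, s (Suc m)}" using sb by auto
  then show "path_image (arc0 m) = g0 ` {s m<..<s (Suc m)} \<union> {g0 (s m), g0 (s (nxt m))}"
    unfolding arc0_def using sb nxt(3)[OF m] by (simp add: path_image_subpath image_Un)
  show "path_image (arc0 m) \<subseteq> path_image g0"
    unfolding arc0_def using path_image_subpath_subset[of "s m" "s (Suc m)" g0] sb by simp
qed

lemma open_arc0_subset_iff:
  assumes m: "m \<in> {1..k}" and S: "S \<subseteq> {1..k}"
  shows "g0 ` {s m<..<s (Suc m)} \<subseteq> (\<Union>j\<in>S. g0 ` {s j<..<s (Suc j)}) \<longleftrightarrow> m \<in> S"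
proof
  assume sub: "g0 ` {s m<..<s (Suc m)} \<subseteq> (\<Union>j\<in>S. g0 ` {s j<..<s (Suc j)})"
  have mid: "g0 ((s m + s (Suc m)) / 2) \<in> g0 ` {s m<..<s (Suc m)}" using s_bounds[OF m] by auto
  then obtain j where j: "j \<in> S" "g0 ((s m + s (Suc m)) / 2) \<in> g0 ` {s j<..<s (Suc j)}" using sub by blast
  then have "j = m" using open_arcs0_disjoint[OF m, of j] S mid by blast
  then show "m \<in> S" using j(1) by simp
qed blast

end

text \<open>\<open>meet\<close> is the hypothesis on \<open>disk_in \<Delta> L0 \<inter> disk_in \<Delta> L1\<close> read in the chart.\<close>

locale touching_loops = node_loops +
  fixes Sx :: "nat set"
  assumes Sx: "Sx \<subseteq> {1..k}"
    and meet: "(inside (path_image g0) \<union> path_image g0) \<inter> (inside (path_image g1) \<union> path_image g1) =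
               (\<lambda>j. g0 (s j)) ` {1..k} \<union> (\<Union>m\<in>Sx. g0 ` {s m<..<s (Suc m)})"
begin

lemma meet_subset_loop0:
  "(inside (path_image g0) \<union> path_image g0) \<inter> (inside (path_image g1) \<union> path_image g1) \<subseteq> path_image g0"
proof -
  have "g0 (s j) \<in> path_image g0" if "j \<in> {1..k}" for j
    using s_bounds[OF that] by (auto simp: path_image_def)
  moreover have "g0 ` {s m<..<s (Suc m)} \<subseteq> path_image g0" if "m \<in> Sx" for m
    using s_bounds[of m] that Sx by (auto simp: path_image_def)
  ultimately show ?thesis unfolding meet by blast
qed

text \<open>The meet lies on \<open>g0\<close>; a point of \<open>g0\<close> inside \<open>g1\<close> would drag nearby points of the
  inside of \<open>g0\<close> into the meet.\<close>

lemma insides_disjoint: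
  "inside (path_image g0) \<inter> (inside (path_image g1) \<union> path_image g1) = {}"
  "path_image g0 \<inter> inside (path_image g1) = {}"
proof -
  show "inside (path_image g0) \<inter> (inside (path_image g1) \<union> path_image g1) = {}"
    using meet_subset_loop0 inside_no_overlap[of "path_image g0"] by blast
  then have I: "inside (path_image g0) \<inter> inside (path_image g1) = {}" by blast
  show "path_image g0 \<inter> inside (path_image g1) = {}"
  proof (rule ccontr)
    assume "path_image g0 \<inter> inside (path_image g1) \<noteq> {}"
    then obtain z where z: "z \<in> path_image g0" "z \<in> inside (path_image g1)" by blast
    have "open (inside (path_image g1))" using Jordan_inside_outside[OF simple1(1,2)] by blast
    then obtain e where e: "e > 0" "ball z e \<subseteq> inside (path_image g1)" using z(2) open_contains_ball by blast
    have "z \<in> closure (inside (path_image g0))"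
      using z(1) Jordan_inside_outside[OF simple0(1,2)] unfolding frontier_def by blast
    then obtain w where w: "w \<in> inside (path_image g0)" "dist w z < e" using e(1) closure_approachable by blast
    then have "w \<in> ball z e" by (simp add: dist_commute)
    then show False using w(1) e(2) I by blast
  qed
qed

lemma open_arc0_loop1:
  assumes m: "m \<in> {1..k}"
  shows "m \<in> Sx \<Longrightarrow> g0 ` {s m<..<s (Suc m)} \<subseteq> path_image g1"
    and "m \<notin> Sx \<Longrightarrow> g0 ` {s m<..<s (Suc m)} \<inter> path_image g1 = {}"
proof -
  have sub: "g0 ` {s m<..<s (Suc m)} \<subseteq> path_image g0"
    using s_bounds[OF m] by (auto simp: path_image_def)
  show "g0 ` {s m<..<s (Suc m)} \<subseteq> path_image g1" if "m \<in> Sx"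
    using meet insides_disjoint(2) sub that by blast
  show "g0 ` {s m<..<s (Suc m)} \<inter> path_image g1 = {}" if "m \<notin> Sx"
  proof (rule equals0I)
    fix z assume z: "z \<in> g0 ` {s m<..<s (Suc m)} \<inter> path_image g1"
    then have "z \<in> (\<lambda>j. g0 (s j)) ` {1..k} \<union> (\<Union>j\<in>Sx. g0 ` {s j<..<s (Suc j)})"
      using sub unfolding meet[symmetric] by blast
    then show False
    proof
      assume "z \<in> (\<lambda>j. g0 (s j)) ` {1..k}"
      then obtain j where "j \<in> {1..k}" "z = g0 (s j)" by blast
      then show False using z node_not_in_open_arc0[OF m] by blast
    next
      assume "z \<in> (\<Union>j\<in>Sx. g0 ` {s j<..<s (Suc j)})"
      then obtain j where j: "j \<in> Sx" "z \<in> g0 ` {s j<..<s (Suc j)}" by blast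
      have "j \<in> {1..k}" "m \<noteq> j" using j(1) \<open>m \<notin> Sx\<close> Sx by auto
      then show False using open_arcs0_disjoint[OF m] z j(2) by blast
    qed
  qed
qed

lemma node_in_loop1:
  assumes "j \<in> {1..k}"
  shows "g0 (s j) \<in> path_image g1"
proof -
  have "g0 (s j) \<in> path_image g0" using s_bounds[OF assms] by (auto simp: path_image_def)
  moreover have "g0 (s j) \<in> (inside (path_image g0) \<union> path_image g0) \<inter> (inside (path_image g1) \<union> path_image g1)"
    unfolding meet using assms by blast
  ultimately show ?thesis using insides_disjoint(2) by blast
qed

definition t :: "nat \<Rightarrow> real" where
  "t j = (SOME u. u \<in> {0..<1} \<and> g1 u = g0 (s j))"

lemma t_node:
  assumes "j \<in> {1..k}"
  shows "t j \<in> {0..<1}" "g1 (t j) = g0 (s j)"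
proof -
  obtain u where "u \<in> {0..<1}" "g1 u = g0 (s j)"
    using clockwise_param_surj[OF cw1 node_in_loop1[OF assms]] .
  then show "t j \<in> {0..<1}" "g1 (t j) = g0 (s j)"
    unfolding t_def by (metis (mono_tags, lifting) someI_ex)+
qed

lemma t_eq_iff:
  assumes "i \<in> {1..k}" "j \<in> {1..k}"
  shows "t i = t j \<longleftrightarrow> i = j"
  using node_eq_iff[OF assms] t_node(2) assms by metis

definition gap :: "nat \<Rightarrow> real" where
  "gap m = (if t (nxt m) < t m then t m - t (nxt m) else 1 + t m - t (nxt m))"

definition loop1_from :: "nat \<Rightarrow> real \<Rightarrow> complex" where
  "loop1_from m = shiftpath (t (nxt m)) g1"

definition arc1 :: "nat \<Rightarrow> real \<Rightarrow> complex" where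
  "arc1 m = subpath 0 (gap m) (loop1_from m)"

text \<open>In the chart, the loop \<open>Z\<^sub>m\<close> of the theorem is the image of \<open>zeta m\<close>.\<close>

definition zeta :: "nat \<Rightarrow> real \<Rightarrow> complex" where
  "zeta m = arc0 m +++ arc1 m"

lemma arc1:
  assumes m: "m \<in> {1..k}"
  shows "clockwise_param (path_image g1) (loop1_from m)" "loop1_from m 0 = g0 (s (nxt m))"
    "0 < gap m" "gap m < 1" "loop1_from m (gap m) = g0 (s m)"
    "path (arc1 m)" "arc (arc1 m)" "pathstart (arc1 m) = g0 (s (nxt m))" "pathfinish (arc1 m) = g0 (s m)"
    "path_image (arc1 m) \<subseteq> path_image g1"
proof -
  have tn: "t (nxt m) \<in> {0..<1}" "t m \<in> {0..<1}" using t_node(1) nxt(1) m by auto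
  have ne: "t (nxt m) \<noteq> t m" using t_eq_iff[OF nxt(1)[OF m] m] nxt(2)[OF m] by simp
  show cw: "clockwise_param (path_image g1) (loop1_from m)"
    unfolding loop1_from_def by (rule clockwise_param_shiftpath[OF cw1]) (use tn in auto)
  show start: "loop1_from m 0 = g0 (s (nxt m))"
    unfolding loop1_from_def shiftpath_def using tn t_node(2)[OF nxt(1)[OF m]] by simp
  show "0 < gap m" "gap m < 1" unfolding gap_def using tn ne by auto
  show fin: "loop1_from m (gap m) = g0 (s m)"
  proof (cases "t (nxt m) < t m")
    case True
    then show ?thesis unfolding loop1_from_def gap_def shiftpath_def using tn t_node(2)[OF m] by simp
  next
    case False
    then have "t (nxt m) + gap m = 1 + t m" unfolding gap_def by simp
    then show ?thesis
      unfolding loop1_from_def shiftpath_def using tn t_node(2)[OF m] simple1(3)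
      by (cases "t m = 0") auto
  qed
  have sl: "simple_path (loop1_from m)" and il: "path_image (loop1_from m) = path_image g1"
    using cw by (auto simp: clockwise_param_def)
  have gp: "0 \<in> {0..1::real}" "gap m \<in> {0..1}" using \<open>0 < gap m\<close> \<open>gap m < 1\<close> by auto
  show "path (arc1 m)" unfolding arc1_def using simple_path_imp_path[OF sl] gp by simp
  show "pathstart (arc1 m) = g0 (s (nxt m))" "pathfinish (arc1 m) = g0 (s m)"
    unfolding arc1_def using start fin by auto
  have "g0 (s m) \<noteq> g0 (s (nxt m))" using node_eq_iff[OF m nxt(1)[OF m]] nxt(2)[OF m] by auto
  then show "arc (arc1 m)" unfolding arc1_def using arc_simple_path_subpath[OF sl gp] start fin by auto
  show "path_image (arc1 m) \<subseteq> path_image g1"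
    unfolding arc1_def using path_image_subpath_subset[OF gp, of "loop1_from m"] il by simp
qed

lemma zeta:
  assumes m: "m \<in> {1..k}"
  shows "path (zeta m)" "pathfinish (zeta m) = pathstart (zeta m)"
    "path_image (zeta m) = path_image (arc0 m) \<union> path_image (arc1 m)"
    "path_image (zeta m) \<subseteq> path_image g0 \<union> path_image g1"
    "path_image (zeta m) \<inter> (inside (path_image g0) \<union> inside (path_image g1)) = {}"
proof -
  note a0 = arc0[OF m] and a1 = arc1[OF m]
  show "path (zeta m)" "pathfinish (zeta m) = pathstart (zeta m)" unfolding zeta_def using a0 a1 by auto
  show pz: "path_image (zeta m) = path_image (arc0 m) \<union> path_image (arc1 m)"
    unfolding zeta_def using a0 a1 by (simp add: path_image_join)
  then show "path_image (zeta m) \<subseteq> path_image g0 \<union> path_image g1" using a0(6) a1(10) by blast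
  moreover have "path_image g0 \<inter> inside (path_image g0) = {}" "path_image g1 \<inter> inside (path_image g0) = {}"
    "path_image g0 \<inter> inside (path_image g1) = {}" "path_image g1 \<inter> inside (path_image g1) = {}"
    using insides_disjoint inside_no_overlap by blast+
  ultimately show "path_image (zeta m) \<inter> (inside (path_image g0) \<union> inside (path_image g1)) = {}"
    by blast
qed

lemma zeta_simple:
  assumes m: "m \<in> {1..k}" "m \<notin> Sx"
  shows "simple_path (zeta m)"
proof -
  note a0 = arc0[OF m(1)] and a1 = arc1[OF m(1)]
  have "g0 ` {s m<..<s (Suc m)} \<inter> path_image (arc1 m) = {}" using open_arc0_loop1(2)[OF m] a1(10) by blast
  then have meet01: "path_image (arc0 m) \<inter> path_image (arc1 m) \<subseteq> {pathstart (arc0 m), pathstart (arc1 m)}"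
    unfolding a0(5) a0(3) a1(8) by blast
  show ?thesis
    unfolding zeta_def using simple_path_join_loop[OF a0(2) a1(7) _ _ meet01] by (simp add: a0(3,4) a1(8,9))
qed

lemma zeta_subset_loop1:
  assumes "m \<in> Sx"
  shows "path_image (zeta m) \<subseteq> path_image g1"
proof -
  have m: "m \<in> {1..k}" using assms Sx by blast
  show ?thesis
    using node_in_loop1 zeta(3)[OF m] arc0(5)[OF m] arc1(10)[OF m] open_arc0_loop1(1)[OF m assms] m nxt(1)[OF m] by blast
qed

lemma winding_number_zeta:
  assumes w: "w \<in> inside (path_image g0)" and m: "m \<in> {1..k}"
  shows "winding_number (zeta m) w =
           (winding_number (subpath 0 (s (Suc m)) g0) w - winding_number (subpath 0 (s m) g0) w)
         + (winding_number (subpath 0 (t m) g1) w - winding_number (subpath 0 (t (nxt m)) g1) w)"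
proof -
  note a0 = arc0[OF m] and a1 = arc1[OF m]
  have w0: "w \<notin> path_image g0" and w1: "w \<notin> path_image g1" "w \<notin> inside (path_image g1)"
    using w insides_disjoint(1) inside_no_overlap[of "path_image g0"] by blast+
  have "w \<in> outside (path_image g1)" using w1 inside_Un_outside[of "path_image g1"] by blast
  then have wg1: "winding_number g1 w = 0"
    by (rule winding_number_zero_in_outside[OF simple_path_imp_path[OF simple1(1)] simple1(2)])
  have "winding_number (zeta m) w = winding_number (arc0 m) w + winding_number (arc1 m) w"
    unfolding zeta_def by (rule winding_number_join) (use a0 a1 w0 w1 in auto)
  moreover have "winding_number (arc0 m) w =
      winding_number (subpath 0 (s (Suc m)) g0) w - winding_number (subpath 0 (s m) g0) w"
    unfolding arc0_def
    by (rule winding_number_subpath_diff[OF simple_path_imp_path[OF simple0(1)] w0]) (use s_bounds[OF m] in auto)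
  moreover have "winding_number (arc1 m) w =
      winding_number (subpath 0 (t m) g1) w - winding_number (subpath 0 (t (nxt m)) g1) w"
    using winding_number_subpath_shiftpath[OF simple_path_imp_path[OF simple1(1)] simple1(2) w1(1),
        of "t (nxt m)" "t m" "gap m"]
      t_node(1)[OF m] t_node(1)[OF nxt(1)[OF m]] t_eq_iff[OF nxt(1)[OF m] m] nxt(2)[OF m] wg1
    unfolding arc1_def loop1_from_def gap_def by auto
  ultimately show ?thesis by simp
qed

text \<open>The arcs of \<open>g0\<close> telescope to \<open>g0\<close> itself, while the arcs of \<open>g1\<close> cancel, as \<open>nxt\<close> permutes the nodes.\<close>

lemma sum_winding_number_zeta:
  assumes w: "w \<in> inside (path_image g0)"
  shows "(\<Sum>m\<in>{1..k}. winding_number (zeta m) w) = -1"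
proof -
  define V where "V x = winding_number (subpath 0 x g0) w" for x
  define W where "W x = winding_number (subpath 0 x g1) w" for x
  have w0: "w \<notin> path_image g0" using w inside_no_overlap by blast
  have "(\<Sum>m\<in>{1..k}. V (s (Suc m)) - V (s m)) = V (s (Suc k)) - V (s 1)"
    using sum_Suc_diff[of 1 k "\<lambda>m. V (s m)"] two_le_k by simp
  also have "\<dots> = -1"
  proof -
    have "w \<noteq> g0 0" using w0 pathstart_in_path_image[of g0] by (auto simp: pathstart_def)
    then show ?thesis using cw0 w s_first s_last unfolding V_def clockwise_param_def by simp
  qed
  finally have sumV: "(\<Sum>m\<in>{1..k}. V (s (Suc m)) - V (s m)) = -1" .
  have "(\<Sum>m\<in>{1..k}. W (t (nxt m))) = (\<Sum>m\<in>{1..k}. W (t m))"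
    using sum.reindex_bij_betw[OF bij_nxt, of "\<lambda>m. W (t m)"] .
  then have sumW: "(\<Sum>m\<in>{1..k}. W (t m) - W (t (nxt m))) = 0" by (simp add: sum_subtractf)
  show ?thesis
    using winding_number_zeta[OF w] sumV sumW unfolding V_def W_def by (simp add: sum.distrib)
qed

lemma winding_number_zeta_cases:
  assumes w: "w \<in> inside (path_image g0)" and m: "m \<in> {1..k}"
  shows "m \<in> Sx \<Longrightarrow> winding_number (zeta m) w = 0"
    and "winding_number (zeta m) w \<in> {-1, 0, 1}"
proof -
  note z = zeta[OF m]
  have wz: "w \<notin> path_image (zeta m)" using z(5) w by blast
  show in_Sx: "winding_number (zeta m) w = 0" if "m \<in> Sx"
  proof -
    have "w \<in> outside (path_image g1)"
      using w insides_disjoint(1) inside_Un_outside[of "path_image g1"] by blast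
    then have "w \<in> outside (path_image (zeta m))" using outside_mono[OF zeta_subset_loop1[OF that]] by blast
    then show ?thesis by (rule winding_number_zero_in_outside[OF z(1,2)])
  qed
  show "winding_number (zeta m) w \<in> {-1, 0, 1}"
    using in_Sx simple_closed_path_winding_number_cases[OF zeta_simple[OF m] z(2) wz] by (cases "m \<in> Sx") auto
qed

lemma clockwise_zeta_encloses:
  assumes m: "m \<in> {1..k}" "m \<notin> Sx" and w: "w \<in> inside (path_image g0)"
    and wn: "winding_number (zeta m) w = -1"
  shows "clockwise_param (path_image (zeta m)) (zeta m)"
    and "inside (path_image g0) \<union> inside (path_image g1) \<subseteq> inside (path_image (zeta m))"
proof -
  note z = zeta[OF m(1)] and sz = zeta_simple[OF m]
  have in_inside: "x \<in> inside (path_image (zeta m))"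
    if "x \<notin> path_image (zeta m)" "winding_number (zeta m) x \<noteq> 0" for x
    using that winding_number_zero_in_outside[OF z(1,2)] inside_Un_outside[of "path_image (zeta m)"] by blast
  have "w \<notin> path_image (zeta m)" using z(5) w by blast
  then have wz: "w \<in> inside (path_image (zeta m))" using in_inside wn by simp
  have "\<forall>x\<in>inside (path_image (zeta m)). winding_number (zeta m) x = -1"
  proof (cases rule: simple_closed_path_winding_number_inside[OF sz])
    case 1
    then have "winding_number (zeta m) w = 1" using wz by blast
    then show ?thesis using wn by simp
  qed blast
  then show cw: "clockwise_param (path_image (zeta m)) (zeta m)"
    using sz z(2) unfolding clockwise_param_def by blast
  have "inside (path_image g0) \<subseteq> inside (path_image (zeta m))"
  proof
    fix x assume x: "x \<in> inside (path_image g0)"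
    have "connected (inside (path_image g0))" using Jordan_inside_outside[OF simple0(1,2)] by blast
    moreover have "inside (path_image g0) \<inter> path_image (zeta m) = {}" using z(5) by blast
    ultimately have "winding_number (zeta m) x = winding_number (zeta m) w"
      by (rule winding_number_eq[OF z(1,2) x w])
    moreover have "x \<notin> path_image (zeta m)" using z(5) x by blast
    ultimately show "x \<in> inside (path_image (zeta m))" using in_inside wn by simp
  qed
  moreover have "inside (path_image g1) \<subseteq> inside (path_image (zeta m))"
  proof -
    note a0 = arc0[OF m(1)] and a1 = arc1[OF m(1)]
    have "path_image (arc0 m) \<inter> path_image g1 \<subseteq> {loop1_from m 0, loop1_from m (gap m)}"
      unfolding a0(5) a1(2,5) using open_arc0_loop1(2)[OF m] by blast
    moreover have "path_image (arc0 m) \<inter> inside (path_image g1) = {}" using a0(6) insides_disjoint(2) by blast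
    moreover have "pathstart (arc0 m) = loop1_from m (gap m)" "pathfinish (arc0 m) = loop1_from m 0"
      using a0(3,4) a1(2,5) by simp_all
    ultimately show ?thesis
      using inside_subset_inside_join_outer_path[OF a1(1,3,4) a0(1)] cw unfolding zeta_def arc1_def by blast

  qed
  ultimately show "inside (path_image g0) \<union> inside (path_image g1) \<subseteq> inside (path_image (zeta m))" by blast
qed

lemma enclosing_zeta:
  obtains m where "m \<in> {1..k}" "m \<notin> Sx" "clockwise_param (path_image (zeta m)) (zeta m)"
    "inside (path_image g0) \<union> inside (path_image g1) \<subseteq> inside (path_image (zeta m))"
proof -
  obtain w where w: "w \<in> inside (path_image g0)" using Jordan_inside_outside[OF simple0(1,2)] by blast
  have "\<exists>m\<in>{1..k}. winding_number (zeta m) w = -1"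
  proof (rule ccontr)
    assume "\<not> ?thesis"
    then have "Re (winding_number (zeta m) w) \<ge> 0" if "m \<in> {1..k}" for m
      using winding_number_zeta_cases(2)[OF w that] that by auto
    then have "0 \<le> (\<Sum>m\<in>{1..k}. Re (winding_number (zeta m) w))" by (rule sum_nonneg)
    then have "0 \<le> Re (\<Sum>m\<in>{1..k}. winding_number (zeta m) w)" by (simp add: Re_sum)
    moreover have "Re (\<Sum>m\<in>{1..k}. winding_number (zeta m) w) = -1"
      unfolding sum_winding_number_zeta[OF w] by simp
    ultimately show False by linarith
  qed
  then obtain m where m: "m \<in> {1..k}" and wn: "winding_number (zeta m) w = -1" by blast
  then have "m \<notin> Sx" using winding_number_zeta_cases(1)[OF w] by force
  then show ?thesis using that m clockwise_zeta_encloses[OF m _ w wn] by blast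
qed

end

locale chart_touching_loops = touching_loops +
  fixes h :: "complex \<Rightarrow> real^3" and L0 L1 :: "(real^3) set"
  assumes disk: "oriented_disk h"
    and loop0: "is_loop L0" "L0 \<subseteq> h ` cball 0 1" and loop1: "is_loop L1" "L1 \<subseteq> h ` cball 0 1"
    and chart0: "path_image g0 = chart_preimage h L0" and chart1: "path_image g1 = chart_preimage h L1"
begin

lemma cw_segs_zeta:
  assumes m: "m \<in> {1..k}"
  shows "cw_open_seg h L0 (h (g0 (s m))) (h (g0 (s (nxt m)))) = h ` g0 ` {s m<..<s (Suc m)}"
    and "cw_closed_seg h L0 (h (g0 (s m))) (h (g0 (s (nxt m)))) \<union> cw_closed_seg h L1 (h (g0 (s (nxt m)))) (h (g0 (s m)))
           = h ` path_image (zeta m)"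
proof -
  note sb = s_bounds[OF m] and a1 = arc1[OF m]
  note segs0 = cw_segs_chart_between[OF disk loop0 cw0[unfolded chart0] sb(1,2,3,4), unfolded nxt(3)[OF m, symmetric]]
  show "cw_open_seg h L0 (h (g0 (s m))) (h (g0 (s (nxt m)))) = h ` g0 ` {s m<..<s (Suc m)}"
    by (rule segs0(2))
  have "cw_closed_seg h L0 (h (g0 (s m))) (h (g0 (s (nxt m)))) = h ` path_image (arc0 m)"
    unfolding segs0(1) arc0_def using sb by (simp add: path_image_subpath)
  moreover have "cw_closed_seg h L1 (h (g0 (s (nxt m)))) (h (g0 (s m))) = h ` path_image (arc1 m)"
    using cw_closed_seg_chart[OF disk loop1 a1(1)[unfolded chart1] a1(3,4)] a1(2,5) a1(3)
    unfolding arc1_def by (simp add: path_image_subpath)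
  ultimately show "cw_closed_seg h L0 (h (g0 (s m))) (h (g0 (s (nxt m)))) \<union>
      cw_closed_seg h L1 (h (g0 (s (nxt m)))) (h (g0 (s m))) = h ` path_image (zeta m)"
    using zeta(3)[OF m] by (simp add: image_Un)
qed

lemma open_seg_subset_iff:
  assumes m: "m \<in> {1..k}"
  shows "cw_open_seg h L0 (h (g0 (s m))) (h (g0 (s (nxt m)))) \<subseteq>
           (\<Union>j\<in>Sx. cw_open_seg h L0 (h (g0 (s j))) (h (g0 (s (nxt j))))) \<longleftrightarrow> m \<in> Sx"
proof -
  have inj: "inj_on h (cball 0 1)" using disk by (simp add: oriented_disk_def)
  have sub: "g0 ` {s j<..<s (Suc j)} \<subseteq> cball 0 1" if "j \<in> {1..k}" for j
  proof -
    have "g0 ` {s j<..<s (Suc j)} \<subseteq> path_image g0" using s_bounds[OF that] by (auto simp: path_image_def)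
    then show ?thesis using chart0 chart_preimage_subset by blast
  qed
  have "(\<Union>j\<in>Sx. cw_open_seg h L0 (h (g0 (s j))) (h (g0 (s (nxt j))))) = (\<Union>j\<in>Sx. h ` g0 ` {s j<..<s (Suc j)})"
    using cw_segs_zeta(1) Sx by (intro SUP_cong) auto
  then have "(\<Union>j\<in>Sx. cw_open_seg h L0 (h (g0 (s j))) (h (g0 (s (nxt j))))) = h ` (\<Union>j\<in>Sx. g0 ` {s j<..<s (Suc j)})"
    by (simp add: image_UN)
  moreover have "(\<Union>j\<in>Sx. g0 ` {s j<..<s (Suc j)}) \<subseteq> cball 0 1" using sub Sx by blast
  ultimately show ?thesis
    unfolding cw_segs_zeta(1)[OF m] using inj_on_image_subset_iff[OF inj sub[OF m]] open_arc0_subset_iff[OF m Sx]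
    by simp
qed

lemma segs_in_nodes:
  assumes n: "\<And>j. j \<in> {1..k} \<Longrightarrow> n j = h (g0 (s j))" and m: "m \<in> {1..k}"
  shows "cw_closed_seg h L0 (n m) (n (1 + m mod k)) \<union> cw_closed_seg h L1 (n (1 + m mod k)) (n m) =
           h ` path_image (zeta m)"
    and "cw_open_seg h L0 (n m) (n (1 + m mod k)) \<subseteq> (\<Union>j\<in>Sx. cw_open_seg h L0 (n j) (n (1 + j mod k)))
           \<longleftrightarrow> m \<in> Sx"
proof -
  have nm: "n j = h (g0 (s j))" "n (1 + j mod k) = h (g0 (s (nxt j)))" if "j \<in> {1..k}" for j
    using n that nxt(1)[OF that] unfolding nxt_def by auto
  show "cw_closed_seg h L0 (n m) (n (1 + m mod k)) \<union> cw_closed_seg h L1 (n (1 + m mod k)) (n m) =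
      h ` path_image (zeta m)"
    unfolding nm[OF m] by (rule cw_segs_zeta(2)[OF m])
  have "(\<Union>j\<in>Sx. cw_open_seg h L0 (n j) (n (1 + j mod k))) =
      (\<Union>j\<in>Sx. cw_open_seg h L0 (h (g0 (s j))) (h (g0 (s (nxt j)))))"
    using nm Sx by (intro SUP_cong) auto
  then show "cw_open_seg h L0 (n m) (n (1 + m mod k)) \<subseteq> (\<Union>j\<in>Sx. cw_open_seg h L0 (n j) (n (1 + j mod k)))
      \<longleftrightarrow> m \<in> Sx"
    unfolding nm[OF m] using open_seg_subset_iff[OF m] by simp
qed

lemma zeta_in_disk: "m \<in> {1..k} \<Longrightarrow> path_image (zeta m) \<subseteq> cball 0 1"
  using zeta(4) chart0 chart1 chart_preimage_subset by blast

lemma zeta_loop_non_crossing: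
  assumes m: "m \<in> {1..k}" "m \<notin> Sx"
  shows "is_loop (h ` path_image (zeta m))" "non_crossing (h ` path_image (zeta m)) L0"
    "non_crossing (h ` path_image (zeta m)) L1"
proof -
  note z = zeta[OF m(1)]
  show "is_loop (h ` path_image (zeta m))"
    by (rule is_loop_chart_image[OF disk zeta_simple[OF m] z(2) zeta_in_disk[OF m(1)]])
  show "non_crossing (h ` path_image (zeta m)) L0" "non_crossing (h ` path_image (zeta m)) L1"
    using non_crossing_chart[OF disk loop0 zeta_in_disk[OF m(1)]] non_crossing_chart[OF disk loop1 zeta_in_disk[OF m(1)]]
      z(5) chart0 chart1 by auto
qed

lemma enclosing_zeta_chart:
  obtains m where "m \<in> {1..k}" "m \<notin> Sx"
    "disk_in (h ` cball 0 1) L0 \<union> disk_in (h ` cball 0 1) L1 \<subseteq> disk_in (h ` cball 0 1) (h ` path_image (zeta m))"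
proof -
  obtain m where m: "m \<in> {1..k}" "m \<notin> Sx" and cw: "clockwise_param (path_image (zeta m)) (zeta m)"
    and sub: "inside (path_image g0) \<union> inside (path_image g1) \<subseteq> inside (path_image (zeta m))"
    by (rule enclosing_zeta)
  have sz: "simple_path (zeta m)" "pathfinish (zeta m) = pathstart (zeta m)" "path_image (zeta m) \<subseteq> cball 0 1"
    using cw zeta_in_disk[OF m(1)] by (auto simp: clockwise_param_def)
  show ?thesis
    using that[OF m] disk_in_chart_mono[OF disk loop0 sz] disk_in_chart_mono[OF disk loop1 sz] sub chart0 chart1
    by auto
qed

end

lemma chart_node_params:
  assumes disk: "oriented_disk h" and L: "is_loop L" "L \<subseteq> h ` cball 0 1"
    and g: "clockwise_param (chart_preimage h L) g" "h (g 0) = n 1" and k: "1 \<le> k"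
    and n_in: "\<forall>i \<in> {1..k}. n i \<in> L" and n_dist: "inj_on n {1..k}"
    and n_cw: "\<forall>j l. 1 < j \<and> j < l \<and> l \<le> k \<longrightarrow> n j \<in> cw_open_seg h L (n 1) (n l)"
  obtains s where "s 1 = 0" "s (Suc k) = 1" "\<And>i j. 1 \<le> i \<Longrightarrow> i < j \<Longrightarrow> j \<le> Suc k \<Longrightarrow> s i < s j"
    "\<And>j. j \<in> {1..k} \<Longrightarrow> h (g (s j)) = n j"
proof -
  have inj: "inj_on h (cball 0 1)" using disk by (simp add: oriented_disk_def)
  have "g u \<in> chart_preimage h L" if "u \<in> {0..1}" for u
    using g(1) that unfolding clockwise_param_def path_image_def by blast
  then have gcb: "g u \<in> cball 0 1" if "u \<in> {0..1}" for u
    using that chart_preimage_subset by blast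
  have "\<exists>u. u \<in> {0..<1} \<and> h (g u) = n j" if "j \<in> {1..k}" for j
  proof -
    have "n j \<in> h ` chart_preimage h L" using n_in that image_chart_preimage[OF L(2)] by auto
    then obtain z where "z \<in> chart_preimage h L" "n j = h z" by blast
    then show ?thesis using clockwise_param_surj[OF g(1)] by metis
  qed
  then obtain \<sigma> where \<sigma>: "\<And>j. j \<in> {1..k} \<Longrightarrow> \<sigma> j \<in> {0..<1} \<and> h (g (\<sigma> j)) = n j" by metis
  have eq_iff: "\<sigma> i = \<sigma> j \<longleftrightarrow> i = j" if "i \<in> {1..k}" "j \<in> {1..k}" for i j
    using \<sigma>[OF that(1)] \<sigma>[OF that(2)] inj_onD[OF n_dist _ that] by metis
  have \<sigma>1: "\<sigma> 1 = 0"
  proof -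
    have "g (\<sigma> 1) = g 0" by (rule inj_onD[OF inj]) (use \<sigma>[of 1] g(2) gcb k in auto)
    then show ?thesis
      using inj_onD[OF simple_path_inj_on_atLeastLessThan, of g "\<sigma> 1" 0] g(1) \<sigma>[of 1] k
      by (auto simp: clockwise_param_def)
  qed
  have pos: "0 < \<sigma> j" if "j \<in> {1..k}" "j \<noteq> 1" for j
    using eq_iff[OF that(1), of 1] \<sigma>[OF that(1)] \<sigma>1 k that(2) by force
  have mono: "\<sigma> j < \<sigma> l" if ord: "1 < j" "j < l" "l \<le> k" for j l
  proof -
    have jl: "j \<in> {1..k}" "l \<in> {1..k}" using ord by auto
    have "n j \<in> cw_open_seg h L (h (g 0)) (h (g (\<sigma> l)))" using n_cw ord g(2) \<sigma>[OF jl(2)] by auto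
    then obtain r where r: "r \<in> {0<..<\<sigma> l}" "n j = h (g r)"
      using cw_open_seg_chart[OF disk L g(1) pos[OF jl(2)]] \<sigma>[OF jl(2)] ord by auto
    have "g r = g (\<sigma> j)" by (rule inj_onD[OF inj]) (use r \<sigma>[OF jl(1)] \<sigma>[OF jl(2)] gcb in auto)
    then have "r = \<sigma> j"
      using simple_path_eq_interior_param[of g r "\<sigma> j"] g(1) r \<sigma>[OF jl(1)] \<sigma>[OF jl(2)]
      by (auto simp: clockwise_param_def)
    then show ?thesis using r by simp
  qed
  define s where "s j = (if j \<le> k then \<sigma> j else 1)" for j
  show ?thesis
  proof
    show "s 1 = 0" "s (Suc k) = 1" using \<sigma>1 k by (auto simp: s_def)
    show "h (g (s j)) = n j" if "j \<in> {1..k}" for j using \<sigma> that by (simp add: s_def)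
    show "s i < s j" if "1 \<le> i" "i < j" "j \<le> Suc k" for i j
      using that mono[of i j] pos[of j] \<sigma>1 \<sigma>[of i] unfolding s_def
      by (cases "i = 1"; cases "j = Suc k") auto
  qed
qed

lemma (in node_loops) chart_meet:
  assumes disk: "oriented_disk h"
    and L: "is_loop L0" "is_loop L1" "L0 \<subseteq> h ` cball 0 1" "L1 \<subseteq> h ` cball 0 1"
    and pg: "path_image g0 = chart_preimage h L0" "path_image g1 = chart_preimage h L1"
    and n: "\<And>j. j \<in> {1..k} \<Longrightarrow> h (g0 (s j)) = n j" and S: "S \<subseteq> {1..k}"
    and inter: "disk_in (h ` cball 0 1) L0 \<inter> disk_in (h ` cball 0 1) L1 =
                n ` {1..k} \<union> (\<Union>m\<in>S. cw_open_seg h L0 (n m) (n (1 + m mod k)))"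
  shows "(inside (path_image g0) \<union> path_image g0) \<inter> (inside (path_image g1) \<union> path_image g1) =
      (\<lambda>j. g0 (s j)) ` {1..k} \<union> (\<Union>m\<in>S. g0 ` {s m<..<s (Suc m)})" (is "?lhs = ?rhs")
proof -
  have inj: "inj_on h (cball 0 1)" using disk by (simp add: oriented_disk_def)
  have region: "disk_in (h ` cball 0 1) L = h ` (inside (chart_preimage h L) \<union> chart_preimage h L)"
    "inside (chart_preimage h L) \<union> chart_preimage h L \<subseteq> cball 0 1" if "is_loop L" "L \<subseteq> h ` cball 0 1" for L
    using loop_regions_chart(1,3)[OF disk that] chart_preimage_subset[of h L] by auto
  have seg: "cw_open_seg h L0 (n m) (n (1 + m mod k)) = h ` g0 ` {s m<..<s (Suc m)}" if m: "m \<in> {1..k}" for m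
    using cw_segs_chart_between(2)[OF disk L(1,3) cw0[unfolded pg(1)] s_bounds(1-4)[OF m]] n[OF m]
      n[OF nxt(1)[OF m]] nxt(3)[OF m] unfolding nxt_def by simp
  have "(\<Union>m\<in>S. cw_open_seg h L0 (n m) (n (1 + m mod k))) = (\<Union>m\<in>S. h ` g0 ` {s m<..<s (Suc m)})"
    using seg S by (intro SUP_cong) auto
  then have "(\<Union>m\<in>S. cw_open_seg h L0 (n m) (n (1 + m mod k))) = h ` (\<Union>m\<in>S. g0 ` {s m<..<s (Suc m)})"
    by (simp add: image_UN)
  moreover have "n ` {1..k} = h ` (\<lambda>j. g0 (s j)) ` {1..k}" using n by (auto simp: image_image)
  ultimately have himg: "h ` ?lhs = h ` ?rhs"
    using inter inj_on_image_Int[OF inj region(2)[OF L(1,3)] region(2)[OF L(2,4)]]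
    unfolding region(1)[OF L(1,3)] region(1)[OF L(2,4)] pg by (simp add: image_Un)
  have lhs: "?lhs \<subseteq> cball 0 1" unfolding pg using region(2)[OF L(1,3)] by blast
  have "g0 (s j) \<in> path_image g0" if "j \<in> {1..k}" for j
    using s_bounds[OF that] by (auto simp: path_image_def)
  moreover have "g0 ` {s m<..<s (Suc m)} \<subseteq> path_image g0" if "m \<in> {1..k}" for m
    using s_bounds[OF that] by (auto simp: path_image_def)
  ultimately have "?rhs \<subseteq> path_image g0" using S by blast
  then have rhs: "?rhs \<subseteq> cball 0 1" using pg chart_preimage_subset by blast
  show ?thesis using inj_on_image_eq_iff[OF inj lhs rhs] himg by simp
qed

lemma chart_configuration:
  assumes disk: "oriented_disk h"
    and L: "is_loop L0" "is_loop L1" "L0 \<subseteq> h ` cball 0 1" "L1 \<subseteq> h ` cball 0 1"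
    and k: "2 \<le> k" and n_in: "\<forall>i \<in> {1..k}. n i \<in> L0" and n_dist: "inj_on n {1..k}"
    and n_cw: "\<forall>i j l. 1 \<le> i \<and> i < j \<and> j < l \<and> l \<le> k \<longrightarrow> n j \<in> cw_open_seg h L0 (n i) (n l)"
    and X: "\<exists>S \<subseteq> {1..k}. X = (\<Union>m \<in> S. cw_open_seg h L0 (n m) (n (1 + m mod k)))"
    and inter: "disk_in (h ` cball 0 1) L0 \<inter> disk_in (h ` cball 0 1) L1 = n ` {1..k} \<union> X"
  obtains g0 g1 s S where "chart_touching_loops g0 g1 k s S h L0 L1"
    "\<And>j. j \<in> {1..k} \<Longrightarrow> n j = h (g0 (s j))" "X = (\<Union>m \<in> S. cw_open_seg h L0 (n m) (n (1 + m mod k)))"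
proof -
  obtain S where S: "S \<subseteq> {1..k}" and XS: "X = (\<Union>m \<in> S. cw_open_seg h L0 (n m) (n (1 + m mod k)))"
    using X by blast
  obtain c0 c1 where c0: "simple_path c0" "pathfinish c0 = pathstart c0" "path_image c0 = chart_preimage h L0"
    and c1: "simple_path c1" "pathfinish c1 = pathstart c1" "path_image c1 = chart_preimage h L1"
    using loop_chart_preimage[OF disk L(1,3)] loop_chart_preimage[OF disk L(2,4)] by metis
  obtain g00 g1 where g00: "clockwise_param (chart_preimage h L0) g00"
    and g1: "clockwise_param (chart_preimage h L1) g1"
    using clockwise_param_exists[OF c0(1,2)] clockwise_param_exists[OF c1(1,2)] c0(3) c1(3) by metis
  have "n 1 \<in> h ` chart_preimage h L0" using n_in k image_chart_preimage[OF L(3)] by auto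
  then obtain z where "z \<in> chart_preimage h L0" "h z = n 1" by auto
  then obtain g0 where g0: "clockwise_param (chart_preimage h L0) g0" "h (g0 0) = n 1"
    using clockwise_param_from[OF g00] by metis
  have "\<forall>j l. 1 < j \<and> j < l \<and> l \<le> k \<longrightarrow> n j \<in> cw_open_seg h L0 (n 1) (n l)"
    using n_cw[rule_format, of 1] by auto
  then obtain s where s: "s 1 = 0" "s (Suc k) = 1" "\<And>i j. 1 \<le> i \<Longrightarrow> i < j \<Longrightarrow> j \<le> Suc k \<Longrightarrow> s i < s j"
    and n: "\<And>j. j \<in> {1..k} \<Longrightarrow> h (g0 (s j)) = n j"
    using chart_node_params[OF disk L(1,3) g0 _ n_in n_dist] k by auto
  have pg: "path_image g0 = chart_preimage h L0" "path_image g1 = chart_preimage h L1"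
    using g0(1) g1 by (auto simp: clockwise_param_def)
  interpret node_loops g0 g1 k s
    using g0(1) g1 pg k s by unfold_locales auto
  have "chart_touching_loops g0 g1 k s S h L0 L1"
    using node_loops_axioms chart_meet[OF disk L pg n S inter[unfolded XS]] S disk L pg
    unfolding chart_touching_loops_def chart_touching_loops_axioms_def touching_loops_def touching_loops_axioms_def
    by blast
  then show ?thesis using that n XS by metis
qed

theorem mainTheorem2:
  fixes h :: "complex \<Rightarrow> real^3" and \<Delta> L0 L1 X :: "(real^3) set"
    and k :: nat and n :: "nat \<Rightarrow> real^3"
  assumes disk: "oriented_disk h" and Delta: "\<Delta> = h ` cball 0 1"
    and loops: "is_loop L0" "is_loop L1" "L0 \<subseteq> \<Delta>" "L1 \<subseteq> \<Delta>"
    and nc: "non_crossing L0 L1"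
    and k: "k \<in> {2, 3}"
    and n_in: "\<forall>i \<in> {1..k}. n i \<in> L0"
    and n_dist: "inj_on n {1..k}"
    and n_cw: "\<forall>i j l. 1 \<le> i \<and> i < j \<and> j < l \<and> l \<le> k \<longrightarrow> n j \<in> cw_open_seg h L0 (n i) (n l)"
    and X: "\<exists>S \<subseteq> {1..k}. X = (\<Union>m \<in> S. cw_open_seg h L0 (n m) (n (1 + m mod k)))"
    and inter: "disk_in \<Delta> L0 \<inter> disk_in \<Delta> L1 = n ` {1..k} \<union> X"
  shows "(\<forall>m \<in> {1..k}. \<not> cw_open_seg h L0 (n m) (n (1 + m mod k)) \<subseteq> X \<longrightarrow>
            (let Z = cw_closed_seg h L0 (n m) (n (1 + m mod k)) \<union>
                     cw_closed_seg h L1 (n (1 + m mod k)) (n m)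
             in is_loop Z \<and> non_crossing Z L0 \<and> non_crossing Z L1))
       \<and> (\<exists>m \<in> {1..k}. \<not> cw_open_seg h L0 (n m) (n (1 + m mod k)) \<subseteq> X \<and>
            (let Z = cw_closed_seg h L0 (n m) (n (1 + m mod k)) \<union>
                     cw_closed_seg h L1 (n (1 + m mod k)) (n m)
             in disk_in \<Delta> L0 \<union> disk_in \<Delta> L1 \<subseteq> disk_in \<Delta> Z))"
proof -
  have "2 \<le> k" using k by auto
  then obtain g0 g1 s S where cfg: "chart_touching_loops g0 g1 k s S h L0 L1"
    and n: "\<And>j. j \<in> {1..k} \<Longrightarrow> n j = h (g0 (s j))"
    and XS: "X = (\<Union>m \<in> S. cw_open_seg h L0 (n m) (n (1 + m mod k)))"
    using chart_configuration[OF disk loops(1,2) loops(3,4)[unfolded Delta] _ n_in n_dist n_cw X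
        inter[unfolded Delta]] by blast
  interpret chart_touching_loops g0 g1 k s S h L0 L1 by (rule cfg)
  note Z = segs_in_nodes(1)[OF n] and open_iff = segs_in_nodes(2)[OF n, folded XS]
  obtain m where m: "m \<in> {1..k}" "m \<notin> S" and encl:
    "disk_in \<Delta> L0 \<union> disk_in \<Delta> L1 \<subseteq> disk_in \<Delta> (h ` path_image (zeta m))"
    unfolding Delta by (rule enclosing_zeta_chart)
  show ?thesis
  proof
    show "\<forall>m \<in> {1..k}. \<not> cw_open_seg h L0 (n m) (n (1 + m mod k)) \<subseteq> X \<longrightarrow>
        (let Z = cw_closed_seg h L0 (n m) (n (1 + m mod k)) \<union> cw_closed_seg h L1 (n (1 + m mod k)) (n m)
         in is_loop Z \<and> non_crossing Z L0 \<and> non_crossing Z L1)"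
      using zeta_loop_non_crossing by (simp add: Let_def Z[simplified] open_iff[simplified])
    show "\<exists>m \<in> {1..k}. \<not> cw_open_seg h L0 (n m) (n (1 + m mod k)) \<subseteq> X \<and>
        (let Z = cw_closed_seg h L0 (n m) (n (1 + m mod k)) \<union> cw_closed_seg h L1 (n (1 + m mod k)) (n m)
         in disk_in \<Delta> L0 \<union> disk_in \<Delta> L1 \<subseteq> disk_in \<Delta> Z)"
      using m encl by (intro bexI[OF _ m(1)]) (simp add: Let_def Z[simplified] open_iff[simplified])
  qed
qed

end
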